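(* Let $(Q,P)$ be a weakly quasi-lattice ordered group and let $\Lambda$ be a $P$-graph with $\mathrm{FA}(\Lambda)\neq\emptyset$. Then the path groupoid $\mathcal{G}(\Lambda)$ and the boundary-path groupoid $\partial\mathcal{G}(\Lambda)$ are ample, second-countable and Hausdorff.
   Context: $(Q,P)$ weakly quasi-lattice ordered: $Q$ a discrete group, $P\subseteq Q$ a subsemigroup containing the identity $e$ with $P\cap P^{-1}=\{e\}$, and, with $p\le r$ meaning $pq=r$ for some $q\in P$, any two elements of $P$ with a common upper bound have a least common upper bound. A $P$-graph is a countable small category $\Lambda$ (identities $\Lambda^{(0)}$, range/source $r,s$) with a functor $d:\Lambda\to P$ with unique factorisation (if $d(\lambda)=pq$ then there are unique $\mu,\nu$ with $\lambda=\mu\nu$, $d(\mu)=p$, $d(\nu)=q$). Write $\Lambda^m=d^{-1}(m)$, $\lambda\Lambda=\{\lambda\mu: s(\lambda)=r(\mu)\}$, $\mu\preceq\lambda$ iff $\lambda\in\mu\Lambda$. $\mathrm{FA}(\Lambda)$ is the set of $\lambda$ such that for all $\mu\in\lambda\Lambda,\nu\in\Lambda$ there is finite $J\subseteq\Lambda$ with $\mu\Lambda\cap\nu\Lambda=\bigcup_{\kappa\in J}\kappa\Lambda$. A filter is a nonempty hereditary and directed subset of $\Lambda$ (w.r.t. $\preceq$); $\mathcal{F}(\Lambda)$ the filters, $\mathcal{U}(\Lambda)$ the maximal filters. $\mathcal{P}(\Lambda)$ has the product topology from $\{0,1\}^\Lambda$; subsets have subspace topology. Path space $\mathcal{X}(\Lambda)=\{x\in\mathcal{F}(\Lambda):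 x\cap\mathrm{FA}(\Lambda)\neq\emptyset\}$; boundary-path space $\partial\mathcal{X}(\Lambda)$ = closure of $\mathcal{U}(\Lambda)\cap\mathcal{X}(\Lambda)$ in $\mathcal{X}(\Lambda)$. For $x\in\mathcal{X}(\Lambda)$ and $m\in P$ with $x\cap\Lambda^m\neq\emptyset$ (write $x\in\mathrm{dom}(m)$), let $x(0,m)$ be the unique element of $x\cap\Lambda^m$ and $x\cdot m=\{\mu: x(0,m)\mu\in x\}\in\mathcal{X}(\Lambda)$. The path groupoid $\mathcal{G}(\Lambda)$ is the set of $(x,q,y)\in\mathcal{X}(\Lambda)\times Q\times\mathcal{X}(\Lambda)$ for which there are $m,n\in P$ with $q=mn^{-1}$, $x\in\mathrm{dom}(m)$, $y\in\mathrm{dom}(n)$, $x\cdot m=y\cdot n$; composable pairs are $((x,q,y),(y,r,z))$ with product $(x,qr,z)$, inverse $(x,q,y)^{-1}=(y,q^{-1},x)$; its topology has basis the sets $\{(x,mn^{-1},y)\in\mathcal{G}(\Lambda): x\in U, y\in V, x\cdot m=y\cdot n\}$ for $m,n\in P$ and $U,V\subseteq\mathcal{X}(\Lambda)$ open. The unit space is identified with $\mathcal{X}(\Lambda)$ via $x\mapsto(x,e,x)$. The boundary-path groupoid $\partial\mathcal{G}(\Lambda)$ is the reduction $\{g\in\mathcal{G}(\Lambda): r(g),s(g)\in\partial\mathcal{X}(\Lambda)\}$ with the subspace topology. A topological groupoid is étale if it is locally compact with locally compact Hausdorff unit space and the source map is a local homeomorphism; ample if moreover the unit space has a basis of compact open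 sets. *)

theory Defs
  imports "HOL-Analysis.Analysis"
begin

text \<open>The group Q is written additively (class group_add, not necessarily
commutative): the paper's product pq is p + q, the identity e is 0 and q^{-1} is - q.\<close>

definition wqlo_le :: "'q::group_add set \<Rightarrow> 'q \<Rightarrow> 'q \<Rightarrow> bool" where
  "wqlo_le P p r \<longleftrightarrow> (\<exists>q\<in>P. p + q = r)"

definition wqlo :: "'q::group_add set \<Rightarrow> bool" where
  "wqlo P \<longleftrightarrow>
     (\<forall>p\<in>P. \<forall>q\<in>P. p + q \<in> P) \<and> 0 \<in> P \<and> P \<inter> uminus ` P = {0} \<and>
     (\<forall>p\<in>P. \<forall>q\<in>P. (\<exists>r\<in>P. wqlo_le P p r \<and> wqlo_le P q r) \<longrightarrow>
        (\<exists>l\<in>P. wqlo_le P p l \<and> wqlo_le P q l \<and>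
           (\<forall>r\<in>P. wqlo_le P p r \<and> wqlo_le P q r \<longrightarrow> wqlo_le P l r)))"

text \<open>A small category given by its set of morphisms, source, range and a
composition (comp l m = l m, defined when src l = rng m).  Objects are identified
with identity morphisms.\<close>

record ('a, 'q) pgraph =
  mor :: "'a set"
  src :: "'a \<Rightarrow> 'a"
  rng :: "'a \<Rightarrow> 'a"
  comp :: "'a \<Rightarrow> 'a \<Rightarrow> 'a"
  deg :: "'a \<Rightarrow> 'q"

definition objs :: "('a, 'q) pgraph \<Rightarrow> 'a set" where
  "objs L = {v \<in> mor L. src L v = v}"

definition is_category :: "('a, 'q) pgraph \<Rightarrow> bool" where
  "is_category L \<longleftrightarrow>
     (\<forall>l\<in>mor L. src L l \<in> mor L \<and> rng L l \<in> mor L \<and>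
        src L (src L l) = src L l \<and> rng L (src L l) = src L l \<and>
        src L (rng L l) = rng L l \<and> rng L (rng L l) = rng L l) \<and>
     (\<forall>l\<in>mor L. \<forall>m\<in>mor L. src L l = rng L m \<longrightarrow>
        comp L l m \<in> mor L \<and> rng L (comp L l m) = rng L l \<and> src L (comp L l m) = src L m) \<and>
     (\<forall>l\<in>mor L. \<forall>m\<in>mor L. \<forall>n\<in>mor L. src L l = rng L m \<longrightarrow> src L m = rng L n \<longrightarrow>
        comp L (comp L l m) n = comp L l (comp L m n)) \<and>
     (\<forall>l\<in>mor L. comp L (rng L l) l = l \<and> comp L l (src L l) = l)"

definition is_Pgraph :: "'q::group_add set \<Rightarrow> ('a, 'q) pgraph \<Rightarrow> bool" where
  "is_Pgraph P L \<longleftrightarrow>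
     countable (mor L) \<and> is_category L \<and>
     (\<forall>l\<in>mor L. deg L l \<in> P) \<and>
     (\<forall>v\<in>objs L. deg L v = 0) \<and>
     (\<forall>l\<in>mor L. \<forall>m\<in>mor L. src L l = rng L m \<longrightarrow> deg L (comp L l m) = deg L l + deg L m) \<and>
     (\<forall>l\<in>mor L. \<forall>p\<in>P. \<forall>q\<in>P. deg L l = p + q \<longrightarrow>
        (\<exists>!(m, n). m \<in> mor L \<and> n \<in> mor L \<and> src L m = rng L n \<and>
                   l = comp L m n \<and> deg L m = p \<and> deg L n = q))"

definition degset :: "('a, 'q) pgraph \<Rightarrow> 'q \<Rightarrow> 'a set" where
  "degset L m = {l \<in> mor L. deg L l = m}"

definition ext :: "('a, 'q) pgraph \<Rightarrow> 'a \<Rightarrow> 'a set" where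
  "ext L l = {comp L l m | m. m \<in> mor L \<and> src L l = rng L m}"

definition prec :: "('a, 'q) pgraph \<Rightarrow> 'a \<Rightarrow> 'a \<Rightarrow> bool" where
  "prec L m l \<longleftrightarrow> m \<in> mor L \<and> l \<in> ext L m"

definition FA :: "('a, 'q) pgraph \<Rightarrow> 'a set" where
  "FA L = {l \<in> mor L. \<forall>m\<in>ext L l. \<forall>n\<in>mor L.
      \<exists>J. finite J \<and> J \<subseteq> mor L \<and> ext L m \<inter> ext L n = (\<Union>k\<in>J. ext L k)}"

definition is_filter :: "('a, 'q) pgraph \<Rightarrow> 'a set \<Rightarrow> bool" where
  "is_filter L x \<longleftrightarrow> x \<subseteq> mor L \<and> x \<noteq> {} \<and>
     (\<forall>l\<in>x. \<forall>m. prec L m l \<longrightarrow> m \<in> x) \<and>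
     (\<forall>l\<in>x. \<forall>m\<in>x. \<exists>n\<in>x. prec L l n \<and> prec L m n)"

definition filters :: "('a, 'q) pgraph \<Rightarrow> 'a set set" where
  "filters L = {x. is_filter L x}"

definition ultrafilters :: "('a, 'q) pgraph \<Rightarrow> 'a set set" where
  "ultrafilters L = {x \<in> filters L. \<forall>y\<in>filters L. x \<subseteq> y \<longrightarrow> y = x}"

definition powtop :: "('a, 'q) pgraph \<Rightarrow> 'a set topology" where
  "powtop L = pullback_topology (Pow (mor L)) (\<lambda>A. restrict (\<lambda>l. l \<in> A) (mor L))
      (product_topology (\<lambda>_. discrete_topology (UNIV :: bool set)) (mor L))"

definition pathspace :: "('a, 'q) pgraph \<Rightarrow> 'a set set" where
  "pathspace L = {x \<in> filters L. x \<inter> FA L \<noteq> {}}"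

definition pathtop :: "('a, 'q) pgraph \<Rightarrow> 'a set topology" where
  "pathtop L = subtopology (powtop L) (pathspace L)"

definition bdryspace :: "('a, 'q) pgraph \<Rightarrow> 'a set set" where
  "bdryspace L = pathtop L closure_of (ultrafilters L \<inter> pathspace L)"

definition in_dom :: "('a, 'q) pgraph \<Rightarrow> 'q \<Rightarrow> 'a set \<Rightarrow> bool" where
  "in_dom L m x \<longleftrightarrow> x \<in> pathspace L \<and> x \<inter> degset L m \<noteq> {}"

definition seg :: "('a, 'q) pgraph \<Rightarrow> 'a set \<Rightarrow> 'q \<Rightarrow> 'a" where
  "seg L x m = (THE l. l \<in> x \<inter> degset L m)"

definition shift :: "('a, 'q) pgraph \<Rightarrow> 'a set \<Rightarrow> 'q \<Rightarrow> 'a set" where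
  "shift L x m = {u \<in> mor L. src L (seg L x m) = rng L u \<and> comp L (seg L x m) u \<in> x}"

definition pathgpd :: "'q::group_add set \<Rightarrow> ('a, 'q) pgraph \<Rightarrow> ('a set \<times> 'q \<times> 'a set) set" where
  "pathgpd P L = {(x, q, y). x \<in> pathspace L \<and> y \<in> pathspace L \<and>
      (\<exists>m\<in>P. \<exists>n\<in>P. q = m + - n \<and> in_dom L m x \<and> in_dom L n y \<and> shift L x m = shift L y n)}"

definition gpd_basic_set :: "'q::group_add set \<Rightarrow> ('a, 'q) pgraph \<Rightarrow> 'q \<Rightarrow> 'q \<Rightarrow> 'a set set \<Rightarrow> 'a set set
    \<Rightarrow> ('a set \<times> 'q \<times> 'a set) set" where
  "gpd_basic_set P L m n U V = {(x, q, y) \<in> pathgpd P L. q = m + - n \<and> x \<in> U \<and> y \<in> V \<and>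
      in_dom L m x \<and> in_dom L n y \<and> shift L x m = shift L y n}"

definition pathgpd_top :: "'q::group_add set \<Rightarrow> ('a, 'q) pgraph \<Rightarrow> ('a set \<times> 'q \<times> 'a set) topology" where
  "pathgpd_top P L = topology_generated_by
      {gpd_basic_set P L m n U V | m n U V. m \<in> P \<and> n \<in> P \<and>
          openin (pathtop L) U \<and> openin (pathtop L) V}"

definition bdrygpd_top :: "'q::group_add set \<Rightarrow> ('a, 'q) pgraph \<Rightarrow> ('a set \<times> 'q \<times> 'a set) topology" where
  "bdrygpd_top P L = subtopology (pathgpd_top P L)
      {(x, q, y) \<in> pathgpd P L. x \<in> bdryspace L \<and> y \<in> bdryspace L}"

text \<open>For a groupoid whose elements are triples (x,q,y) with the operations of the
path groupoid, carried by topspace T: units are (x,0,x), source (y,0,y), range (x,0,x),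
composable pairs ((x,q,y),(y,r,z)) with product (x,q+r,z), inverse (y,-q,x).\<close>

definition tg_units :: "('x \<times> 'q::group_add \<times> 'x) topology \<Rightarrow> ('x \<times> 'q \<times> 'x) set" where
  "tg_units T = {g \<in> topspace T. fst (snd g) = 0 \<and> snd (snd g) = fst g}"

definition tg_src :: "('x \<times> 'q::group_add \<times> 'x) \<Rightarrow> ('x \<times> 'q \<times> 'x)" where
  "tg_src g = (snd (snd g), 0, snd (snd g))"

definition tg_inv :: "('x \<times> 'q::group_add \<times> 'x) \<Rightarrow> ('x \<times> 'q \<times> 'x)" where
  "tg_inv g = (snd (snd g), - fst (snd g), fst g)"

definition tg_mult :: "('x \<times> 'q::group_add \<times> 'x) \<times> ('x \<times> 'q \<times> 'x) \<Rightarrow> ('x \<times> 'q \<times> 'x)" where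
  "tg_mult gh = (fst (fst gh), fst (snd (fst gh)) + fst (snd (snd gh)), snd (snd (snd gh)))"

definition tg_composable :: "('x \<times> 'q::group_add \<times> 'x) topology \<Rightarrow> (('x \<times> 'q \<times> 'x) \<times> ('x \<times> 'q \<times> 'x)) set" where
  "tg_composable T = {(g, h). g \<in> topspace T \<and> h \<in> topspace T \<and> snd (snd g) = fst h}"

definition topological_groupoid :: "('x \<times> 'q::group_add \<times> 'x) topology \<Rightarrow> bool" where
  "topological_groupoid T \<longleftrightarrow>
     continuous_map T T tg_inv \<and>
     continuous_map (subtopology (prod_topology T T) (tg_composable T)) T tg_mult"

definition etale :: "('x \<times> 'q::group_add \<times> 'x) topology \<Rightarrow> bool" where
  "etale T \<longleftrightarrow> topological_groupoid T \<and> locally_compact_space T \<and>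
     locally_compact_space (subtopology T (tg_units T)) \<and>
     Hausdorff_space (subtopology T (tg_units T)) \<and>
     (\<forall>g\<in>topspace T. \<exists>W. openin T W \<and> g \<in> W \<and>
        openin (subtopology T (tg_units T)) (tg_src ` W) \<and>
        homeomorphic_map (subtopology T W) (subtopology T (tg_src ` W)) tg_src)"

definition ample :: "('x \<times> 'q::group_add \<times> 'x) topology \<Rightarrow> bool" where
  "ample T \<longleftrightarrow> etale T \<and>
     (\<forall>U x. openin (subtopology T (tg_units T)) U \<and> x \<in> U \<longrightarrow>
        (\<exists>K. compactin (subtopology T (tg_units T)) K \<and>
             openin (subtopology T (tg_units T)) K \<and> x \<in> K \<and> K \<subseteq> U))"

end

theory Submission
  imports Defs
begin

text \<open>
  Points of the path space are filters of \<Lambda>, and P(\<Lambda>) carries the topology of the Cantor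
  cube {0,1}^\<Lambda>, which is compact, Hausdorff and, \<Lambda> being countable, second countable.
  For \<lambda> \<in> FA(\<Lambda>) the filters containing \<lambda> form a closed set, because the finiteness
  condition defining FA(\<Lambda>) detects a failure of directedness on finitely many coordinates;
  hence the path space has a basis of compact open cylinders.

  An element (x, q, y) of the path groupoid is witnessed by morphisms \<alpha> \<in> x, \<beta> \<in> y with
  x\<cdot>\<alpha> = y\<cdot>\<beta> and q = d(\<alpha>) d(\<beta>)^-1. Two witnesses of the same element have a common
  extension inside x and y, so every neighbourhood of an element contains a basic open set
  whose degrees are those of any prescribed witness. For a witness with \<alpha> \<in> FA(\<Lambda>) the map
  y \<mapsto> (\<alpha>(y\<cdot>\<beta>), q, y) is a continuous inverse of the source map on such a basic set, so
  the groupoid is etale over the path space. All of this passes to reductions to closed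
  invariant sets of units, in particular to the boundary-path space, which is invariant
  because prepending \<alpha> and removing \<beta> preserve maximal filters.
\<close>

locale P_graph =
  fixes P :: "'q::group_add set" and L :: "('a, 'q) pgraph"
  assumes is_Pgraph: "is_Pgraph P L"
begin

lemma is_category: "is_category L"
  using is_Pgraph unfolding is_Pgraph_def by (elim conjE)

lemma src_mor [simp]: "l \<in> mor L \<Longrightarrow> src L l \<in> mor L"
  and rng_mor [simp]: "l \<in> mor L \<Longrightarrow> rng L l \<in> mor L"
  and src_src [simp]: "l \<in> mor L \<Longrightarrow> src L (src L l) = src L l"
  and rng_src [simp]: "l \<in> mor L \<Longrightarrow> rng L (src L l) = src L l"
  and src_rng [simp]: "l \<in> mor L \<Longrightarrow> src L (rng L l) = rng L l"
  and rng_rng [simp]: "l \<in> mor L \<Longrightarrow> rng L (rng L l) = rng L l"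
  using is_category unfolding is_category_def by auto

lemma comp_mor [simp]: "l \<in> mor L \<Longrightarrow> m \<in> mor L \<Longrightarrow> src L l = rng L m \<Longrightarrow> comp L l m \<in> mor L"
  and rng_comp [simp]: "l \<in> mor L \<Longrightarrow> m \<in> mor L \<Longrightarrow> src L l = rng L m \<Longrightarrow> rng L (comp L l m) = rng L l"
  and src_comp [simp]: "l \<in> mor L \<Longrightarrow> m \<in> mor L \<Longrightarrow> src L l = rng L m \<Longrightarrow> src L (comp L l m) = src L m"
  using is_category unfolding is_category_def by auto

lemma comp_rng [simp]: "l \<in> mor L \<Longrightarrow> comp L (rng L l) l = l"
  and comp_src [simp]: "l \<in> mor L \<Longrightarrow> comp L l (src L l) = l"
  using is_category unfolding is_category_def by auto

lemma comp_assoc: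
  "\<lbrakk>l \<in> mor L; m \<in> mor L; n \<in> mor L; src L l = rng L m; src L m = rng L n\<rbrakk>
    \<Longrightarrow> comp L (comp L l m) n = comp L l (comp L m n)"
  using is_category unfolding is_category_def by blast

lemma countable_mor: "countable (mor L)"
  and deg_in_P [simp]: "l \<in> mor L \<Longrightarrow> deg L l \<in> P"
  and deg_comp [simp]:
    "l \<in> mor L \<Longrightarrow> m \<in> mor L \<Longrightarrow> src L l = rng L m \<Longrightarrow> deg L (comp L l m) = deg L l + deg L m"
  using is_Pgraph unfolding is_Pgraph_def by auto

lemma deg_src [simp]: "l \<in> mor L \<Longrightarrow> deg L (src L l) = 0"
  and deg_rng [simp]: "l \<in> mor L \<Longrightarrow> deg L (rng L l) = 0"
  using is_Pgraph unfolding is_Pgraph_def objs_def by auto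

lemma factorisation_unique:
  assumes "m \<in> mor L" "n \<in> mor L" "src L m = rng L n"
    and "m' \<in> mor L" "n' \<in> mor L" "src L m' = rng L n'"
    and "comp L m n = comp L m' n'" and "deg L m = deg L m'"
  shows "m = m' \<and> n = n'"
proof -
  define fac where "fac = (\<lambda>(a, b). a \<in> mor L \<and> b \<in> mor L \<and> src L a = rng L b \<and>
      comp L m n = comp L a b \<and> deg L a = deg L m \<and> deg L b = deg L n)"
  have "deg L m + deg L n = deg L m + deg L n'"
    using assms deg_comp by metis
  then have "fac (m', n')"
    using assms unfolding fac_def by simp
  moreover have "fac (m, n)" and "\<exists>!ab. fac ab"
    using is_Pgraph assms(1-3) unfolding is_Pgraph_def fac_def by simp_all
  ultimately show ?thesis
    by blast
qed

lemma comp_left_cancel: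
  "\<lbrakk>l \<in> mor L; m \<in> mor L; n \<in> mor L; src L l = rng L m; src L l = rng L n;
    comp L l m = comp L l n\<rbrakk> \<Longrightarrow> m = n"
  using factorisation_unique[of l m l n] by auto

lemma prec_iff: "prec L m l \<longleftrightarrow> m \<in> mor L \<and> (\<exists>u \<in> mor L. src L m = rng L u \<and> l = comp L m u)"
  unfolding prec_def ext_def by auto

lemma prec_mor: "prec L m l \<Longrightarrow> m \<in> mor L \<and> l \<in> mor L"
  unfolding prec_iff by auto

lemma prec_rng: "prec L m l \<Longrightarrow> rng L m = rng L l"
  unfolding prec_iff by auto

lemma prec_comp: "l \<in> mor L \<Longrightarrow> m \<in> mor L \<Longrightarrow> src L l = rng L m \<Longrightarrow> prec L l (comp L l m)"
  unfolding prec_iff by auto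

lemma prec_refl: "l \<in> mor L \<Longrightarrow> prec L l l"
  using prec_comp[of l "src L l"] by simp

lemma rng_prec: "l \<in> mor L \<Longrightarrow> prec L (rng L l) l"
  using prec_comp[of "rng L l" l] by simp

lemma prec_trans: assumes "prec L a b" "prec L b c" shows "prec L a c"
proof -
  obtain u where u: "a \<in> mor L" "u \<in> mor L" "src L a = rng L u" "b = comp L a u"
    using assms(1) prec_iff by auto
  obtain v where v: "v \<in> mor L" "src L b = rng L v" "c = comp L b v"
    using assms(2) prec_iff by auto
  have "c = comp L a (comp L u v)" and "src L u = rng L v"
    using u v comp_assoc by simp_all
  then show ?thesis
    using u v prec_comp by simp
qed

lemma prec_comp_cancel:
  assumes "a \<in> mor L" "u \<in> mor L" "v \<in> mor L" "src L a = rng L u" "src L a = rng L v"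
    and "prec L (comp L a u) (comp L a v)"
  shows "prec L u v"
proof -
  obtain w where w: "w \<in> mor L" "src L u = rng L w" "comp L a v = comp L (comp L a u) w"
    using assms prec_iff by auto
  then have "v = comp L u w"
    using assms comp_assoc comp_left_cancel[of a v "comp L u w"] by simp
  then show ?thesis
    using w assms prec_comp by simp
qed

lemma prec_comp_mono:
  assumes "a \<in> mor L" "src L a = rng L u" "prec L u v"
  shows "prec L (comp L a u) (comp L a v)"
proof -
  obtain w where w: "u \<in> mor L" "w \<in> mor L" "src L u = rng L w" "v = comp L u w"
    using assms(3) prec_iff by auto
  then have "comp L a v = comp L (comp L a u) w"
    using assms comp_assoc by simp
  then show ?thesis
    using w assms prec_comp by simp
qed

lemma prec_deg_unique: assumes "prec L m l" "prec L m' l" "deg L m = deg L m'" shows "m = m'"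
proof -
  obtain u u' where "m \<in> mor L" "u \<in> mor L" "src L m = rng L u" "l = comp L m u"
    and "m' \<in> mor L" "u' \<in> mor L" "src L m' = rng L u'" "l = comp L m' u'"
    using assms prec_iff by auto
  then show ?thesis
    using factorisation_unique[of m u m' u'] assms(3) by auto
qed

lemma FA_prec: assumes "l \<in> FA L" "prec L l m" shows "m \<in> FA L"
proof -
  have "ext L m \<subseteq> ext L l"
    using assms(2) prec_trans prec_mor unfolding prec_def by blast
  moreover have "m \<in> mor L"
    using assms(2) prec_mor by auto
  ultimately show ?thesis
    using assms(1) unfolding FA_def by (simp add: subset_iff)
qed

lemma FA_common_extensions:
  assumes "l \<in> FA L" "prec L l m" "n \<in> mor L"
  obtains J where "finite J" "J \<subseteq> mor L" "\<And>k. prec L m k \<and> prec L n k \<longleftrightarrow> (\<exists>j\<in>J. prec L j k)"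
proof -
  have "m \<in> ext L l" "m \<in> mor L"
    using assms(2) prec_mor unfolding prec_def by auto
  then obtain J where J: "finite J" "J \<subseteq> mor L" "ext L m \<inter> ext L n = (\<Union>k\<in>J. ext L k)"
    using assms(1,3) unfolding FA_def by blast
  have "prec L m k \<and> prec L n k \<longleftrightarrow> (\<exists>j\<in>J. prec L j k)" for k
    using J(2,3) \<open>m \<in> mor L\<close> assms(3) unfolding prec_def by blast
  then show ?thesis
    using that J(1,2) by blast
qed

lemma filter_subset: "is_filter L x \<Longrightarrow> x \<subseteq> mor L"
  and filter_nonempty: "is_filter L x \<Longrightarrow> x \<noteq> {}"
  and filter_hereditary: "is_filter L x \<Longrightarrow> l \<in> x \<Longrightarrow> prec L m l \<Longrightarrow> m \<in> x"
  and filter_directed: "is_filter L x \<Longrightarrow> l \<in> x \<Longrightarrow> m \<in> x \<Longrightarrow> \<exists>n\<in>x. prec L l n \<and> prec L m n"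
  unfolding is_filter_def by blast+

lemma is_filterI:
  assumes "x \<subseteq> mor L" "x \<noteq> {}" "\<And>l m. l \<in> x \<Longrightarrow> prec L m l \<Longrightarrow> m \<in> x"
    and "\<And>l m. l \<in> x \<Longrightarrow> m \<in> x \<Longrightarrow> \<exists>n\<in>x. prec L l n \<and> prec L m n"
  shows "is_filter L x"
  using assms unfolding is_filter_def by auto

lemma filter_deg_unique:
  assumes "is_filter L x" "l \<in> x" "l' \<in> x" "deg L l = deg L l'" shows "l = l'"
  using filter_directed[OF assms(1-3)] prec_deg_unique assms(4) by blast

lemma filter_rng: "is_filter L x \<Longrightarrow> l \<in> x \<Longrightarrow> l' \<in> x \<Longrightarrow> rng L l = rng L l'"
  using filter_directed prec_rng by metis

lemma seg_deg: assumes "is_filter L x" "l \<in> x" shows "seg L x (deg L l) = l"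
  unfolding seg_def degset_def
  using assms filter_subset filter_deg_unique by (intro the_equality) auto

end

text \<open>For a \<in> x, shift_by L x a is the paper's x \<cdot> d(a) (lemma shift_deg).\<close>

definition shift_by :: "('a, 'q) pgraph \<Rightarrow> 'a set \<Rightarrow> 'a \<Rightarrow> 'a set" where
  "shift_by L x a = {u \<in> mor L. src L a = rng L u \<and> comp L a u \<in> x}"

definition prepend :: "('a, 'q) pgraph \<Rightarrow> 'a \<Rightarrow> 'a set \<Rightarrow> 'a set" where
  "prepend L a z = {m. \<exists>n\<in>z. n \<in> mor L \<and> src L a = rng L n \<and> prec L m (comp L a n)}"

context P_graph begin

lemma shift_deg: "is_filter L x \<Longrightarrow> l \<in> x \<Longrightarrow> shift L x (deg L l) = shift_by L x l"
  unfolding shift_def shift_by_def using seg_deg by simp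

lemma mem_shift_by: "u \<in> shift_by L x a \<longleftrightarrow> u \<in> mor L \<and> src L a = rng L u \<and> comp L a u \<in> x"
  unfolding shift_by_def by auto

lemma shift_by_filter: assumes "is_filter L x" "a \<in> x" shows "is_filter L (shift_by L x a)"
proof (rule is_filterI)
  have a: "a \<in> mor L"
    using assms filter_subset by auto
  show "shift_by L x a \<subseteq> mor L"
    unfolding shift_by_def by auto
  show "shift_by L x a \<noteq> {}"
    using a assms unfolding shift_by_def by (auto intro!: exI[of _ "src L a"])
  show "m \<in> shift_by L x a" if l: "l \<in> shift_by L x a" and "prec L m l" for l m
  proof -
    have "src L a = rng L m"
      using that prec_rng unfolding shift_by_def by auto
    then have "prec L (comp L a m) (comp L a l)"
      using prec_comp_mono a that by auto
    then show ?thesis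
      using filter_hereditary assms(1) that \<open>src L a = rng L m\<close> prec_mor unfolding shift_by_def by auto
  qed
  show "\<exists>n\<in>shift_by L x a. prec L l n \<and> prec L m n"
    if l: "l \<in> shift_by L x a" and m: "m \<in> shift_by L x a" for l m
  proof -
    obtain n where n: "n \<in> x" "prec L (comp L a l) n" "prec L (comp L a m) n"
      using filter_directed assms(1) l m unfolding shift_by_def by blast
    obtain w where w: "w \<in> mor L" "src L (comp L a l) = rng L w" "n = comp L (comp L a l) w"
      using n prec_iff by auto
    have lm: "l \<in> mor L" "src L a = rng L l" "m \<in> mor L" "src L a = rng L m"
      using l m unfolding shift_by_def by auto
    have n_eq: "n = comp L a (comp L l w)" and lw: "src L l = rng L w"
      using w lm a comp_assoc by simp_all
    have "comp L l w \<in> shift_by L x a"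
      using n n_eq lm lw w unfolding shift_by_def by auto
    moreover have "prec L m (comp L l w)"
      using prec_comp_cancel[of a m "comp L l w"] n n_eq a lm lw w by auto
    ultimately show ?thesis
      using prec_comp lm w lw by blast
  qed
qed

lemma src_mem_shift_by: "is_filter L x \<Longrightarrow> a \<in> x \<Longrightarrow> src L a \<in> shift_by L x a"
  using filter_subset unfolding shift_by_def by fastforce

lemma shift_by_comp:
  assumes "a \<in> mor L" "b \<in> mor L" "src L a = rng L b"
  shows "shift_by L (shift_by L x a) b = shift_by L x (comp L a b)"
proof (rule set_eqI)
  fix u
  show "u \<in> shift_by L (shift_by L x a) b \<longleftrightarrow> u \<in> shift_by L x (comp L a b)"
  proof (cases "u \<in> mor L \<and> src L b = rng L u")
    case True
    then have "comp L (comp L a b) u = comp L a (comp L b u)"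
      using assms comp_assoc by simp
    then show ?thesis
      using True assms unfolding shift_by_def by auto
  qed (use assms in \<open>auto simp: shift_by_def\<close>)
qed

lemma shift_by_eq_src:
  assumes "is_filter L x" "is_filter L y" "a \<in> x" "b \<in> y" "shift_by L x a = shift_by L y b"
  shows "src L a = src L b"
proof -
  have "src L a \<in> shift_by L y b"
    using src_mem_shift_by assms by metis
  then show ?thesis
    using assms filter_subset mem_shift_by by metis
qed

lemma prepend_filter:
  assumes "is_filter L z" "a \<in> mor L" "src L a \<in> z"
  shows "is_filter L (prepend L a z)" and "a \<in> prepend L a z"
proof -
  have z: "n \<in> mor L" "rng L n = src L a" if "n \<in> z" for n
    using that filter_subset filter_rng[OF assms(1) _ assms(3)] assms by auto
  have comp_mem: "comp L a n \<in> prepend L a z" if "n \<in> z" for n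
    using that z assms(2) prec_refl unfolding prepend_def by fastforce
  show "a \<in> prepend L a z"
    using comp_mem[OF assms(3)] assms(2) by simp
  show "is_filter L (prepend L a z)"
  proof (rule is_filterI)
    show "prepend L a z \<subseteq> mor L"
      unfolding prepend_def using prec_mor by auto
    show "prepend L a z \<noteq> {}"
      using \<open>a \<in> prepend L a z\<close> by auto
    show "m \<in> prepend L a z" if "l \<in> prepend L a z" "prec L m l" for l m
      using that prec_trans unfolding prepend_def by blast
    show "\<exists>n\<in>prepend L a z. prec L l n \<and> prec L m n"
      if lm: "l \<in> prepend L a z" "m \<in> prepend L a z" for l m
    proof -
      obtain n n' where n: "n \<in> z" "prec L l (comp L a n)" "n' \<in> z" "prec L m (comp L a n')"
        using lm unfolding prepend_def by blast
      obtain k where k: "k \<in> z" "prec L n k" "prec L n' k"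
        using filter_directed assms(1) n by blast
      then have "prec L (comp L a n) (comp L a k)" "prec L (comp L a n') (comp L a k)"
        using prec_comp_mono assms(2) z n by auto
      then show ?thesis
        using comp_mem[OF k(1)] n prec_trans by blast
    qed
  qed
qed

lemma shift_by_prepend:
  assumes "is_filter L z" "a \<in> mor L" "src L a \<in> z"
  shows "shift_by L (prepend L a z) a = z"
proof -
  have z: "n \<in> mor L" "rng L n = src L a" if "n \<in> z" for n
    using that filter_subset filter_rng[OF assms(1) _ assms(3)] assms by auto
  show ?thesis
  proof
    show "shift_by L (prepend L a z) a \<subseteq> z"
    proof
      fix u assume "u \<in> shift_by L (prepend L a z) a"
      then obtain n where u: "u \<in> mor L" "src L a = rng L u" "n \<in> z" "prec L (comp L a u) (comp L a n)"
        unfolding shift_by_def prepend_def by auto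
      then have "prec L u n"
        using prec_comp_cancel assms(2) z by auto
      then show "u \<in> z"
        using filter_hereditary assms(1) u by blast
    qed
    show "z \<subseteq> shift_by L (prepend L a z) a"
    proof
      fix u assume "u \<in> z"
      then show "u \<in> shift_by L (prepend L a z) a"
        unfolding shift_by_def prepend_def using z assms(2) by (auto intro!: bexI[of _ u] prec_refl)
    qed
  qed
qed

lemma prepend_shift_by:
  assumes "is_filter L x" "a \<in> x"
  shows "prepend L a (shift_by L x a) = x"
proof
  show "prepend L a (shift_by L x a) \<subseteq> x"
    unfolding prepend_def shift_by_def using filter_hereditary assms(1) by blast
  show "x \<subseteq> prepend L a (shift_by L x a)"
  proof
    fix m assume "m \<in> x"
    then obtain n where n: "n \<in> x" "prec L m n" "prec L a n"
      using filter_directed assms by blast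
    then obtain w where "w \<in> mor L" "src L a = rng L w" "n = comp L a w"
      using prec_iff by auto
    then show "m \<in> prepend L a (shift_by L x a)"
      using n unfolding prepend_def shift_by_def by auto
  qed
qed

lemma mem_ultrafilters_iff:
  "x \<in> ultrafilters L \<longleftrightarrow> is_filter L x \<and> (\<forall>y. is_filter L y \<and> x \<subseteq> y \<longrightarrow> y = x)"
  unfolding ultrafilters_def filters_def by auto

lemma prepend_ultrafilter:
  assumes "z \<in> ultrafilters L" "a \<in> mor L" "src L a \<in> z"
  shows "prepend L a z \<in> ultrafilters L"
  unfolding mem_ultrafilters_iff
proof (intro conjI allI impI)
  have z: "is_filter L z"
    using assms mem_ultrafilters_iff by auto
  show "is_filter L (prepend L a z)"
    using prepend_filter z assms by auto
  fix y assume y: "is_filter L y \<and> prepend L a z \<subseteq> y"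
  then have "a \<in> y"
    using prepend_filter z assms by auto
  have "z \<subseteq> shift_by L y a"
    using y shift_by_prepend[OF z assms(2,3)] unfolding shift_by_def by blast
  then have "shift_by L y a = z"
    using assms(1) shift_by_filter y \<open>a \<in> y\<close> unfolding mem_ultrafilters_iff by auto
  then show "y = prepend L a z"
    using prepend_shift_by y \<open>a \<in> y\<close> by auto
qed

lemma shift_by_ultrafilter:
  assumes "y \<in> ultrafilters L" "b \<in> y"
  shows "shift_by L y b \<in> ultrafilters L"
  unfolding mem_ultrafilters_iff
proof (intro conjI allI impI)
  have y: "is_filter L y"
    using assms mem_ultrafilters_iff by auto
  show "is_filter L (shift_by L y b)"
    using shift_by_filter y assms by auto
  fix z assume z: "is_filter L z \<and> shift_by L y b \<subseteq> z"
  have b: "b \<in> mor L" "src L b \<in> z"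
    using z y assms filter_subset src_mem_shift_by by blast+
  have "y \<subseteq> prepend L b z"
    using prepend_shift_by[OF y assms(2)] z unfolding prepend_def by blast
  then have "prepend L b z = y"
    using assms(1) prepend_filter z b unfolding mem_ultrafilters_iff by auto
  then show "z = shift_by L y b"
    using shift_by_prepend z b by auto
qed

end

section \<open>The Cantor-cube topology on subsets\<close>

definition power_topology :: "'a set \<Rightarrow> 'a set topology" where
  "power_topology M = pullback_topology (Pow M) (\<lambda>A. restrict (\<lambda>l. l \<in> A) M)
      (product_topology (\<lambda>_. discrete_topology (UNIV :: bool set)) M)"

definition cylinder :: "'a set \<Rightarrow> 'a set \<Rightarrow> 'a set \<Rightarrow> 'a set set" where
  "cylinder M F G = {A \<in> Pow M. F \<subseteq> A \<and> G \<inter> A = {}}"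

lemma powtop_eq_power_topology: "powtop L = power_topology (mor L)"
  unfolding powtop_def power_topology_def ..

lemma topspace_power_topology [simp]: "topspace (power_topology M) = Pow M"
  unfolding power_topology_def topspace_pullback_topology by (auto simp: PiE_def)

lemma cylinder_antimono: "F \<subseteq> F' \<Longrightarrow> G \<subseteq> G' \<Longrightarrow> cylinder M F' G' \<subseteq> cylinder M F G"
  unfolding cylinder_def by auto

lemma cylinder_nbhd_if_openin:
  assumes "openin (power_topology M) S" "A \<in> S"
  obtains F G where "finite F" "finite G" "F \<subseteq> M" "G \<subseteq> M" "A \<in> cylinder M F G" "cylinder M F G \<subseteq> S"
proof -
  let ?i = "\<lambda>A. restrict (\<lambda>l. l \<in> A) M"
  obtain U where U: "openin (product_topology (\<lambda>_. discrete_topology UNIV) M) U" "S = ?i -` U \<inter> Pow M"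
    using assms(1) unfolding power_topology_def openin_pullback_topology by auto
  then obtain V where V: "finite {i \<in> M. V i \<noteq> UNIV}" "?i A \<in> PiE M V" "PiE M V \<subseteq> U"
    using assms(2) unfolding openin_product_topology_alt by auto
  define F where "F = {i \<in> M. V i \<noteq> UNIV \<and> i \<in> A}"
  define G where "G = {i \<in> M. V i \<noteq> UNIV \<and> i \<notin> A}"
  have "cylinder M F G \<subseteq> S"
  proof
    fix B assume B: "B \<in> cylinder M F G"
    have "?i B \<in> PiE M V"
    proof (rule PiE_I)
      fix i assume i: "i \<in> M"
      show "?i B i \<in> V i"
      proof (cases "V i = UNIV")
        case False
        then have "i \<in> B \<longleftrightarrow> i \<in> A"
          using B i unfolding cylinder_def F_def G_def by auto
        then show ?thesis
          using V(2) i by (auto simp: PiE_def Pi_def)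
      qed simp
    qed auto
    then show "B \<in> S"
      using U V(3) B unfolding cylinder_def by blast
  qed
  moreover have "finite F" "finite G"
    using V(1) unfolding F_def G_def by (rule finite_subset[rotated], auto)+
  moreover have "A \<in> cylinder M F G"
    using assms(2) U unfolding cylinder_def F_def G_def by auto
  moreover have "F \<subseteq> M" "G \<subseteq> M"
    unfolding F_def G_def by auto
  ultimately show ?thesis
    using that by blast
qed

lemma openin_power_topologyI:
  assumes "S \<subseteq> Pow M"
    and "\<And>A. A \<in> S \<Longrightarrow>
      \<exists>F G. finite F \<and> finite G \<and> F \<subseteq> M \<and> G \<subseteq> M \<and> A \<in> cylinder M F G \<and> cylinder M F G \<subseteq> S"
  shows "openin (power_topology M) S"
proof -
  let ?i = "\<lambda>A. restrict (\<lambda>l. l \<in> A) M"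
  have "openin (product_topology (\<lambda>_. discrete_topology UNIV) M) (?i ` S)"
    unfolding openin_product_topology_alt
  proof (intro ballI)
    fix f assume "f \<in> ?i ` S"
    then obtain A where A: "A \<in> S" "f = ?i A"
      by (rule imageE)
    obtain F G where FG: "finite F" "finite G" "F \<subseteq> M" "G \<subseteq> M" "A \<in> cylinder M F G"
        "cylinder M F G \<subseteq> S"
      using assms(2)[OF A(1)] by (elim exE conjE)
    define V where "V = (\<lambda>i. if i \<in> F \<union> G then {f i} else (UNIV :: bool set))"
    have "{i \<in> M. V i \<noteq> topspace (discrete_topology UNIV)} \<subseteq> F \<union> G"
      by (auto simp: V_def)
    then have "finite {i \<in> M. V i \<noteq> topspace (discrete_topology UNIV)}"
      using FG(1,2) by (meson finite_Un finite_subset)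
    moreover have "f \<in> PiE M V"
      using A unfolding V_def by (auto simp: PiE_def)
    moreover have "PiE M V \<subseteq> ?i ` S"
    proof
      fix g assume g: "g \<in> PiE M V"
      define B where "B = {i \<in> M. g i}"
      have "?i B = g"
      proof
        fix i
        show "?i B i = g i"
          using g unfolding B_def by (cases "i \<in> M") (auto simp: PiE_def extensional_def)
      qed
      moreover have "g i = f i" if "i \<in> F \<union> G" for i
        using g FG(3,4) that unfolding V_def by (auto simp: PiE_def Pi_def)
      then have "B \<in> cylinder M F G"
        using FG(3-5) A unfolding B_def cylinder_def by auto
      ultimately show "g \<in> ?i ` S"
        using FG(6) by blast
    qed
    ultimately show "\<exists>U. finite {i \<in> M. U i \<noteq> topspace (discrete_topology UNIV)} \<and>
        (\<forall>i\<in>M. openin (discrete_topology UNIV) (U i)) \<and> f \<in> PiE M U \<and> PiE M U \<subseteq> ?i ` S"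
      by auto
  qed
  moreover have "S = ?i -` (?i ` S) \<inter> Pow M"
  proof
    show "?i -` (?i ` S) \<inter> Pow M \<subseteq> S"
    proof
      fix B assume "B \<in> ?i -` (?i ` S) \<inter> Pow M"
      then obtain A where "A \<in> S" "?i B = ?i A" "B \<subseteq> M" "A \<subseteq> M"
        using assms(1) by auto
      then show "B \<in> S"
        by (metis (mono_tags, lifting) restrict_apply' subset_antisym subset_iff)
    qed
  qed (use assms(1) in blast)
  ultimately show ?thesis
    unfolding power_topology_def openin_pullback_topology by blast
qed

lemma openin_cylinder:
  assumes "finite F" "finite G" "F \<subseteq> M" "G \<subseteq> M"
  shows "openin (power_topology M) (cylinder M F G)"
proof (rule openin_power_topologyI)
  show "cylinder M F G \<subseteq> Pow M"
    unfolding cylinder_def by auto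
qed (use assms in blast)

lemma closedin_cylinder:
  assumes "finite F" "finite G" "F \<subseteq> M" "G \<subseteq> M"
  shows "closedin (power_topology M) (cylinder M F G)"
proof -
  have "cylinder M F G = Pow M - (\<Union>l\<in>F. cylinder M {} {l}) - (\<Union>l\<in>G. cylinder M {l} {})"
    using assms(3,4) unfolding cylinder_def by auto
  moreover have "closedin (power_topology M) (Pow M)"
    using closedin_topspace[of "power_topology M"] by simp
  moreover have "openin (power_topology M) (\<Union>l\<in>F. cylinder M {} {l})"
    "openin (power_topology M) (\<Union>l\<in>G. cylinder M {l} {})"
    using assms by (auto intro: openin_cylinder)
  ultimately show ?thesis
    by (simp add: closedin_diff)
qed

lemma continuous_map_into_power_topology:
  assumes "\<And>y. y \<in> topspace Y \<Longrightarrow> f y \<subseteq> M"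
    and "\<And>l. l \<in> M \<Longrightarrow> openin Y {y \<in> topspace Y. l \<in> f y}"
    and "\<And>l. l \<in> M \<Longrightarrow> openin Y {y \<in> topspace Y. l \<notin> f y}"
  shows "continuous_map Y (power_topology M) f"
  unfolding continuous_map
proof (intro conjI allI impI)
  show "f ` topspace Y \<subseteq> topspace (power_topology M)"
    using assms(1) by auto
  have cylinder_preimage: "openin Y {y \<in> topspace Y. f y \<in> cylinder M F G}"
    if "finite F" "finite G" "F \<subseteq> M" "G \<subseteq> M" for F G
  proof -
    have "{y \<in> topspace Y. f y \<in> cylinder M F G} =
        ((\<Inter>l\<in>F. {y \<in> topspace Y. l \<in> f y}) \<inter> topspace Y) \<inter>
        ((\<Inter>l\<in>G. {y \<in> topspace Y. l \<notin> f y}) \<inter> topspace Y)"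
      using assms(1) unfolding cylinder_def by auto
    moreover have "openin Y ((\<Inter>l\<in>F. {y \<in> topspace Y. l \<in> f y}) \<inter> topspace Y)"
      using that assms(2) by (intro openin_INT) auto
    moreover have "openin Y ((\<Inter>l\<in>G. {y \<in> topspace Y. l \<notin> f y}) \<inter> topspace Y)"
      using that assms(3) by (intro openin_INT) auto
    ultimately show ?thesis
      by auto
  qed
  fix U assume U: "openin (power_topology M) U"
  show "openin Y {y \<in> topspace Y. f y \<in> U}"
  proof (subst openin_subopen, intro ballI)
    fix y assume y: "y \<in> {y \<in> topspace Y. f y \<in> U}"
    then obtain F G where FG: "finite F" "finite G" "F \<subseteq> M" "G \<subseteq> M" "f y \<in> cylinder M F G"
        "cylinder M F G \<subseteq> U"
      using cylinder_nbhd_if_openin[OF U] by blast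
    then show "\<exists>T. openin Y T \<and> y \<in> T \<and> T \<subseteq> {y \<in> topspace Y. f y \<in> U}"
      using y cylinder_preimage[OF FG(1-4)] by (intro exI[of _ "{y \<in> topspace Y. f y \<in> cylinder M F G}"]) auto
  qed
qed

lemma compact_space_power_topology: "compact_space (power_topology M)"
proof -
  let ?T = "product_topology (\<lambda>_. discrete_topology (UNIV :: bool set)) M"
  let ?k = "\<lambda>f. {l \<in> M. f l}"
  have "compact_space ?T"
    by (simp add: compact_space_product_topology compact_space_discrete_topology)
  then have "compactin ?T (topspace ?T)"
    unfolding compact_space_def .
  moreover have "continuous_map ?T (power_topology M) ?k"
  proof (rule continuous_map_into_power_topology)
    fix l assume l: "l \<in> M"
    have "continuous_map ?T (discrete_topology UNIV) (\<lambda>f. f l)"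
      using l by (rule continuous_map_product_projection)
    then have "openin ?T {y \<in> topspace ?T. y l \<in> {b}}" for b
      by (rule openin_continuous_map_preimage) simp
    from this[of True] this[of False]
    show "openin ?T {y \<in> topspace ?T. l \<in> ?k y}" "openin ?T {y \<in> topspace ?T. l \<notin> ?k y}"
      using l by simp_all
  qed blast
  moreover have "?k ` topspace ?T = Pow M"
  proof
    show "Pow M \<subseteq> ?k ` topspace ?T"
    proof
      fix A assume "A \<in> Pow M"
      then have "?k (restrict (\<lambda>l. l \<in> A) M) = A"
        by auto
      moreover have "restrict (\<lambda>l. l \<in> A) M \<in> topspace ?T"
        by (auto simp: PiE_def)
      ultimately show "A \<in> ?k ` topspace ?T"
        by (rule image_eqI[OF sym])
    qed
  qed blast
  ultimately show ?thesis
    unfolding compact_space_def using image_compactin by fastforce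
qed

lemma Hausdorff_space_power_topology: "Hausdorff_space (power_topology M)"
  unfolding Hausdorff_space_def
proof (intro allI impI)
  fix x y assume xy: "x \<in> topspace (power_topology M) \<and> y \<in> topspace (power_topology M) \<and> x \<noteq> y"
  then obtain l where "l \<in> x \<and> l \<notin> y \<or> l \<notin> x \<and> l \<in> y"
    by blast
  moreover have "x \<subseteq> M" "y \<subseteq> M"
    using xy by simp_all
  ultimately have "l \<in> M" "l \<in> x \<and> l \<notin> y \<or> l \<notin> x \<and> l \<in> y"
    by blast+
  then have "x \<in> cylinder M {l} {} \<and> y \<in> cylinder M {} {l} \<or> x \<in> cylinder M {} {l} \<and> y \<in> cylinder M {l} {}"
    using \<open>x \<subseteq> M\<close> \<open>y \<subseteq> M\<close> unfolding cylinder_def by auto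
  moreover have "disjnt (cylinder M {l} {}) (cylinder M {} {l})"
    unfolding cylinder_def disjnt_def by auto
  moreover have "openin (power_topology M) (cylinder M {l} {})" "openin (power_topology M) (cylinder M {} {l})"
    using \<open>l \<in> M\<close> by (simp_all add: openin_cylinder)
  ultimately show "\<exists>U V. openin (power_topology M) U \<and> openin (power_topology M) V \<and> x \<in> U \<and> y \<in> V \<and> disjnt U V"
    by (meson disjnt_sym)
qed

lemma second_countable_power_topology:
  assumes "countable M" shows "second_countable (power_topology M)"
  unfolding second_countable_def
proof (intro exI conjI)
  let ?fin = "{F. finite F \<and> F \<subseteq> M}"
  let ?B = "(\<lambda>(F, G). cylinder M F G) ` (?fin \<times> ?fin)"
  show "countable ?B"
    using countable_Collect_finite_subset[OF assms] by auto
  show "\<forall>V\<in>?B. openin (power_topology M) V"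
    by (auto intro: openin_cylinder)
  show "\<forall>U x. openin (power_topology M) U \<and> x \<in> U \<longrightarrow> (\<exists>V\<in>?B. x \<in> V \<and> V \<subseteq> U)"
  proof (intro allI impI)
    fix U x assume "openin (power_topology M) U \<and> x \<in> U"
    then obtain F G where FG: "finite F" "finite G" "F \<subseteq> M" "G \<subseteq> M" "x \<in> cylinder M F G"
        "cylinder M F G \<subseteq> U"
      by (metis cylinder_nbhd_if_openin)
    then have "cylinder M F G \<in> ?B"
      by (intro rev_image_eqI[of "(F, G)"]) auto
    with FG(5,6) show "\<exists>V\<in>?B. x \<in> V \<and> V \<subseteq> U"
      by (intro bexI[of _ "cylinder M F G"] conjI)
  qed
qed

section \<open>The path space\<close>

context P_graph begin

lemma pathspace_subset: "pathspace L \<subseteq> Pow (mor L)"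
  unfolding pathspace_def filters_def using filter_subset by auto

lemma pathtop_eq: "pathtop L = subtopology (power_topology (mor L)) (pathspace L)"
  unfolding pathtop_def powtop_eq_power_topology ..

lemma topspace_pathtop [simp]: "topspace (pathtop L) = pathspace L"
  unfolding pathtop_eq using pathspace_subset by auto

lemma pathspace_filter: "x \<in> pathspace L \<Longrightarrow> is_filter L x"
  unfolding pathspace_def filters_def by auto

lemma pathspace_FA: "x \<in> pathspace L \<Longrightarrow> \<exists>l\<in>x. l \<in> FA L"
  unfolding pathspace_def by auto

lemma pathspaceI: "is_filter L x \<Longrightarrow> l \<in> x \<Longrightarrow> l \<in> FA L \<Longrightarrow> x \<in> pathspace L"
  unfolding pathspace_def filters_def by blast

lemma openin_pathtop_cylinder:
  "finite F \<Longrightarrow> finite G \<Longrightarrow> F \<subseteq> mor L \<Longrightarrow> G \<subseteq> mor L \<Longrightarrow>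
    openin (pathtop L) (cylinder (mor L) F G \<inter> pathspace L)"
  unfolding pathtop_eq by (intro openin_subtopology_Int openin_cylinder)

lemma openin_pathtop_containing: "a \<in> mor L \<Longrightarrow> openin (pathtop L) {x \<in> pathspace L. a \<in> x}"
proof -
  assume a: "a \<in> mor L"
  have "{x \<in> pathspace L. a \<in> x} = cylinder (mor L) {a} {} \<inter> pathspace L"
    using pathspace_subset unfolding cylinder_def by auto
  then show ?thesis
    using openin_pathtop_cylinder[of "{a}" "{}"] a by simp
qed

lemma Hausdorff_space_pathtop: "Hausdorff_space (pathtop L)"
  unfolding pathtop_eq by (rule Hausdorff_space_subtopology[OF Hausdorff_space_power_topology])

lemma second_countable_pathtop: "second_countable (pathtop L)"
  unfolding pathtop_eq
  by (rule second_countable_subtopology[OF second_countable_power_topology[OF countable_mor]])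

lemma continuous_map_into_pathtop:
  assumes "\<And>y. y \<in> topspace Y \<Longrightarrow> f y \<in> pathspace L"
    and "\<And>l. l \<in> mor L \<Longrightarrow> openin Y {y \<in> topspace Y. l \<in> f y}"
    and "\<And>l. l \<in> mor L \<Longrightarrow> openin Y {y \<in> topspace Y. l \<notin> f y}"
  shows "continuous_map Y (pathtop L) f"
proof -
  have "continuous_map Y (power_topology (mor L)) f"
    using assms pathspace_subset by (intro continuous_map_into_power_topology) blast+
  then show ?thesis
    unfolding pathtop_eq continuous_map_in_subtopology using assms(1) by blast
qed

lemma no_filter_in_cylinder:
  assumes "\<And>k. prec L l k \<and> prec L m k \<longleftrightarrow> (\<exists>j\<in>J. prec L j k)" and "B \<in> cylinder M {l, m} J"
  shows "\<not> is_filter L B"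
proof
  assume "is_filter L B"
  moreover have "l \<in> B" "m \<in> B"
    using assms(2) unfolding cylinder_def by auto
  moreover obtain n where "n \<in> B" "prec L l n" "prec L m n"
    using filter_directed[OF \<open>is_filter L B\<close> \<open>l \<in> B\<close> \<open>m \<in> B\<close>] by blast
  moreover obtain j where "j \<in> J" "prec L j n"
    using assms(1) \<open>prec L l n\<close> \<open>prec L m n\<close> by blast
  ultimately show False
    using filter_hereditary assms(2) unfolding cylinder_def by blast
qed

text \<open>Here l need not lie in FA(\<Lambda>): passing through a common extension k of \<lambda>
  and l makes the finiteness condition of FA(\<Lambda>) applicable to the pair k, m.\<close>

lemma non_directed_cylinder_nbhd:
  assumes lam: "lam \<in> FA L" "lam \<in> A" and A: "A \<subseteq> mor L"
    and lm: "l \<in> A" "m \<in> A" "\<not> (\<exists>n\<in>A. prec L l n \<and> prec L m n)"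
  obtains F G where "finite F" "finite G" "F \<subseteq> mor L" "G \<subseteq> mor L" "A \<in> cylinder (mor L) F G"
    "\<And>B. B \<in> cylinder (mor L) F G \<Longrightarrow> \<not> is_filter L B"
proof -
  have "lam \<in> mor L" "l \<in> mor L" "m \<in> mor L"
    using lm A lam by auto
  obtain J1 where J1: "finite J1" "J1 \<subseteq> mor L"
      "\<And>k. prec L lam k \<and> prec L l k \<longleftrightarrow> (\<exists>j\<in>J1. prec L j k)"
    using FA_common_extensions[OF lam(1) prec_refl[OF \<open>lam \<in> mor L\<close>] \<open>l \<in> mor L\<close>] by blast
  show ?thesis
  proof (cases "J1 \<inter> A = {}")
    case True
    show ?thesis
      by (rule that[of "{lam, l}" J1])
        (use True lm A lam J1 no_filter_in_cylinder[OF J1(3)] in \<open>auto simp: cylinder_def\<close>)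
  next
    case False
    then obtain k where k: "k \<in> J1" "k \<in> A"
      by blast
    then have "k \<in> mor L" "prec L lam k" "prec L l k"
      using J1 prec_refl by blast+
    obtain J2 where J2: "finite J2" "J2 \<subseteq> mor L"
        "\<And>k'. prec L k k' \<and> prec L m k' \<longleftrightarrow> (\<exists>j\<in>J2. prec L j k')"
      using FA_common_extensions[OF FA_prec[OF lam(1) \<open>prec L lam k\<close>] prec_refl[OF \<open>k \<in> mor L\<close>]
          \<open>m \<in> mor L\<close>] by blast
    have "J2 \<inter> A = {}"
    proof (rule ccontr)
      assume "J2 \<inter> A \<noteq> {}"
      then obtain k' where "k' \<in> J2" "k' \<in> A"
        by blast
      then have "prec L k k'" "prec L m k'"
        using J2 prec_refl by blast+
      then show False
        using lm(3) \<open>k' \<in> A\<close> \<open>prec L l k\<close> prec_trans by blast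
    qed
    show ?thesis
      by (rule that[of "{k, m}" J2])
        (use \<open>J2 \<inter> A = {}\<close> lm A k J2 \<open>k \<in> mor L\<close> no_filter_in_cylinder[OF J2(3)] in
          \<open>auto simp: cylinder_def\<close>)
  qed
qed

lemma non_filter_cylinder_nbhd:
  assumes lam: "lam \<in> FA L" "lam \<in> A" and A: "A \<subseteq> mor L" "\<not> is_filter L A"
  obtains F G where "finite F" "finite G" "F \<subseteq> mor L" "G \<subseteq> mor L" "A \<in> cylinder (mor L) F G"
    "\<And>B. B \<in> cylinder (mor L) F G \<Longrightarrow> \<not> is_filter L B"
proof (cases "\<forall>l\<in>A. \<forall>m. prec L m l \<longrightarrow> m \<in> A")
  case False
  then obtain l m where lm: "l \<in> A" "prec L m l" "m \<notin> A"
    by blast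
  show ?thesis
  proof (rule that[of "{l}" "{m}"])
    show "A \<in> cylinder (mor L) {l} {m}"
      using lm A unfolding cylinder_def by auto
    show "\<not> is_filter L B" if "B \<in> cylinder (mor L) {l} {m}" for B
      using that filter_hereditary lm unfolding cylinder_def by blast
  qed (use lm A prec_mor in auto)
next
  case True
  then obtain l m where "l \<in> A" "m \<in> A" "\<not> (\<exists>n\<in>A. prec L l n \<and> prec L m n)"
    using A lam unfolding is_filter_def by blast
  with lam A(1) show ?thesis
    using that by (rule non_directed_cylinder_nbhd)
qed

lemma closedin_filters_containing_FA:
  assumes lam: "lam \<in> FA L"
  shows "closedin (power_topology (mor L)) {A \<in> Pow (mor L). is_filter L A \<and> lam \<in> A}"
  unfolding closedin_def
proof
  let ?K = "{A \<in> Pow (mor L). is_filter L A \<and> lam \<in> A}"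
  show "?K \<subseteq> topspace (power_topology (mor L))"
    by auto
  have "lam \<in> mor L"
    using lam unfolding FA_def by auto
  show "openin (power_topology (mor L)) (topspace (power_topology (mor L)) - ?K)"
  proof (rule openin_power_topologyI)
    fix A assume A: "A \<in> topspace (power_topology (mor L)) - ?K"
    show "\<exists>F G. finite F \<and> finite G \<and> F \<subseteq> mor L \<and> G \<subseteq> mor L \<and> A \<in> cylinder (mor L) F G \<and>
        cylinder (mor L) F G \<subseteq> topspace (power_topology (mor L)) - ?K"
    proof (cases "lam \<in> A")
      case False
      then show ?thesis
        using A \<open>lam \<in> mor L\<close> by (intro exI[of _ "{}"] exI[of _ "{lam}"]) (auto simp: cylinder_def)
    next
      case True
      with A have "A \<subseteq> mor L" "\<not> is_filter L A"
        by auto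
      then obtain F G where FG: "finite F" "finite G" "F \<subseteq> mor L" "G \<subseteq> mor L"
          "A \<in> cylinder (mor L) F G" "\<And>B. B \<in> cylinder (mor L) F G \<Longrightarrow> \<not> is_filter L B"
        using non_filter_cylinder_nbhd[OF lam True] by blast
      then have "cylinder (mor L) F G \<subseteq> topspace (power_topology (mor L)) - ?K"
        unfolding cylinder_def by auto
      with FG(1-5) show ?thesis
        by blast
    qed
  qed auto
qed

lemma pathtop_compact_open_base:
  "neighbourhood_base_of (\<lambda>K. compactin (pathtop L) K \<and> openin (pathtop L) K) (pathtop L)"
proof (subst open_neighbourhood_base_of, blast, intro allI impI)
  fix U x assume Ux: "openin (pathtop L) U \<and> x \<in> U"
  then obtain T where T: "openin (power_topology (mor L)) T" "U = T \<inter> pathspace L"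
    unfolding pathtop_eq openin_subtopology by blast
  have "x \<in> T"
    using Ux T by blast
  with T(1) obtain F G where FG: "finite F" "finite G" "F \<subseteq> mor L" "G \<subseteq> mor L"
      "x \<in> cylinder (mor L) F G" "cylinder (mor L) F G \<subseteq> T"
    by (rule cylinder_nbhd_if_openin)
  obtain lam where lam: "lam \<in> x" "lam \<in> FA L"
    using pathspace_FA Ux T by blast
  then have "lam \<in> mor L"
    unfolding FA_def by auto
  let ?K = "cylinder (mor L) (insert lam F) G \<inter> pathspace L"
  have "?K = cylinder (mor L) (insert lam F) G \<inter> {A \<in> Pow (mor L). is_filter L A \<and> lam \<in> A}"
  proof (intro equalityI subsetI)
    fix y assume "y \<in> ?K"
    then show "y \<in> cylinder (mor L) (insert lam F) G \<inter> {A \<in> Pow (mor L). is_filter L A \<and> lam \<in> A}"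
      using pathspace_filter unfolding cylinder_def by auto
  next
    fix y assume y: "y \<in> cylinder (mor L) (insert lam F) G \<inter> {A \<in> Pow (mor L). is_filter L A \<and> lam \<in> A}"
    then have "y \<in> pathspace L"
      using pathspaceI[OF _ _ lam(2)] by blast
    with y show "y \<in> ?K"
      by blast
  qed
  moreover have "closedin (power_topology (mor L)) (cylinder (mor L) (insert lam F) G)"
    using FG \<open>lam \<in> mor L\<close> by (intro closedin_cylinder) auto
  ultimately have "closedin (power_topology (mor L)) ?K"
    using closedin_filters_containing_FA[OF lam(2)] by (simp add: closedin_Int)
  then have "compactin (power_topology (mor L)) ?K"
    using closedin_compact_space compact_space_power_topology by blast
  then have "compactin (pathtop L) ?K"
    unfolding pathtop_eq compactin_subtopology by auto
  moreover have "openin (pathtop L) ?K"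
    using openin_pathtop_cylinder FG \<open>lam \<in> mor L\<close> by auto
  moreover have "x \<in> ?K"
    using FG lam Ux T unfolding cylinder_def by auto
  moreover have "?K \<subseteq> U"
    using cylinder_antimono[of F "insert lam F" G G] FG(6) T(2) by auto
  ultimately show "\<exists>K. (compactin (pathtop L) K \<and> openin (pathtop L) K) \<and> x \<in> K \<and> K \<subseteq> U"
    by blast
qed

end

definition gpd_witness :: "('a, 'q::group_add) pgraph \<Rightarrow> 'a set \<Rightarrow> 'q \<Rightarrow> 'a set \<Rightarrow> 'a \<Rightarrow> 'a \<Rightarrow> bool" where
  "gpd_witness L x q y \<alpha> \<beta> \<longleftrightarrow>
     \<alpha> \<in> x \<and> \<beta> \<in> y \<and> shift_by L x \<alpha> = shift_by L y \<beta> \<and> q = deg L \<alpha> + - deg L \<beta>"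

context P_graph begin

lemma in_dom_iff: "in_dom L m x \<longleftrightarrow> x \<in> pathspace L \<and> (\<exists>\<alpha>\<in>x. deg L \<alpha> = m)"
  unfolding in_dom_def degset_def using pathspace_subset by blast

lemma degree_witness_iff:
  assumes "x \<in> pathspace L" "y \<in> pathspace L"
  shows "m \<in> P \<and> n \<in> P \<and> q = m + - n \<and> in_dom L m x \<and> in_dom L n y \<and> shift L x m = shift L y n \<longleftrightarrow>
    (\<exists>\<alpha> \<beta>. gpd_witness L x q y \<alpha> \<beta> \<and> deg L \<alpha> = m \<and> deg L \<beta> = n)"
proof -
  have "\<alpha> \<in> mor L" if "\<alpha> \<in> x" for \<alpha>
    using that assms(1) pathspace_subset by blast
  moreover have "\<beta> \<in> mor L" if "\<beta> \<in> y" for \<beta>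
    using that assms(2) pathspace_subset by blast
  ultimately show ?thesis
    unfolding in_dom_iff gpd_witness_def using assms pathspace_filter shift_deg by fastforce
qed

lemma pathgpd_iff:
  "(x, q, y) \<in> pathgpd P L \<longleftrightarrow> x \<in> pathspace L \<and> y \<in> pathspace L \<and> (\<exists>\<alpha> \<beta>. gpd_witness L x q y \<alpha> \<beta>)"
  unfolding pathgpd_def using degree_witness_iff by blast

lemma gpd_basic_set_iff:
  "(x, q, y) \<in> gpd_basic_set P L m n U V \<longleftrightarrow> x \<in> pathspace L \<and> y \<in> pathspace L \<and> x \<in> U \<and> y \<in> V \<and>
    (\<exists>\<alpha> \<beta>. gpd_witness L x q y \<alpha> \<beta> \<and> deg L \<alpha> = m \<and> deg L \<beta> = n)"
  (is "?lhs \<longleftrightarrow> ?rhs")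
proof
  assume ?lhs
  then have "x \<in> pathspace L" "y \<in> pathspace L" "m \<in> P" "n \<in> P"
    unfolding gpd_basic_set_def in_dom_iff using pathspace_subset by fastforce+
  with \<open>?lhs\<close> show ?rhs
    using degree_witness_iff[of x y m n q] unfolding gpd_basic_set_def by auto
next
  assume ?rhs
  then show ?lhs
    using degree_witness_iff[of x y m n q] unfolding gpd_basic_set_def pathgpd_iff by auto
qed

lemma gpd_basic_set_subset: "gpd_basic_set P L m n U V \<subseteq> pathgpd P L"
  unfolding gpd_basic_set_def by auto

lemma gpd_basic_set_mono: "U \<subseteq> U' \<Longrightarrow> V \<subseteq> V' \<Longrightarrow> gpd_basic_set P L m n U V \<subseteq> gpd_basic_set P L m n U' V'"
  unfolding gpd_basic_set_def by auto

lemma gpd_witness_mor: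
  "gpd_witness L x q y \<alpha> \<beta> \<Longrightarrow> is_filter L x \<Longrightarrow> is_filter L y \<Longrightarrow> \<alpha> \<in> mor L \<and> \<beta> \<in> mor L"
  unfolding gpd_witness_def using filter_subset by blast

lemma gpd_witness_refl: "\<alpha> \<in> x \<Longrightarrow> gpd_witness L x 0 x \<alpha> \<alpha>"
  unfolding gpd_witness_def by simp

lemma gpd_witness_inverse: "gpd_witness L x q y \<alpha> \<beta> \<Longrightarrow> gpd_witness L y (- q) x \<beta> \<alpha>"
  unfolding gpd_witness_def by (simp add: minus_add)

lemma gpd_witness_trans:
  "gpd_witness L x q y \<alpha> \<beta> \<Longrightarrow> gpd_witness L y r z \<beta> \<delta> \<Longrightarrow> gpd_witness L x (q + r) z \<alpha> \<delta>"
  unfolding gpd_witness_def by (simp add: add.assoc del: add_uminus_conv_diff)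

lemma gpd_witness_right_unique:
  assumes "is_filter L y" "gpd_witness L x q y \<alpha> \<beta>" "gpd_witness L x q y \<alpha> \<beta>'"
  shows "\<beta> = \<beta>'"
proof -
  have "deg L \<beta> = - q + deg L \<alpha>" "deg L \<beta>' = - q + deg L \<alpha>"
    using assms(2,3) unfolding gpd_witness_def by (simp_all add: minus_add add.assoc del: add_uminus_conv_diff)
  then show ?thesis
    using filter_deg_unique assms unfolding gpd_witness_def by metis
qed

lemma gpd_witness_comp_iff:
  assumes "is_filter L x" "is_filter L y" "\<alpha> \<in> mor L" "\<beta> \<in> mor L" "r \<in> mor L"
    and "src L \<alpha> = rng L r" "src L \<beta> = rng L r" "comp L \<alpha> r \<in> x" "comp L \<beta> r \<in> y"
  shows "gpd_witness L x q y (comp L \<alpha> r) (comp L \<beta> r) \<longleftrightarrow> gpd_witness L x q y \<alpha> \<beta>"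
proof -
  have mem: "\<alpha> \<in> x" "\<beta> \<in> y"
    using assms filter_hereditary prec_comp by blast+
  have "deg L (comp L \<alpha> r) + - deg L (comp L \<beta> r) = deg L \<alpha> + - deg L \<beta>"
    using assms by (simp add: minus_add add.assoc del: add_uminus_conv_diff)
  moreover have "shift_by L x (comp L \<alpha> r) = shift_by L y (comp L \<beta> r) \<longleftrightarrow>
      shift_by L x \<alpha> = shift_by L y \<beta>"
  proof
    assume "shift_by L x (comp L \<alpha> r) = shift_by L y (comp L \<beta> r)"
    moreover have "r \<in> shift_by L x \<alpha>" "r \<in> shift_by L y \<beta>"
      using assms unfolding shift_by_def by auto
    ultimately show "shift_by L x \<alpha> = shift_by L y \<beta>"
      using prepend_shift_by[OF shift_by_filter] shift_by_comp assms mem by metis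
  qed (use assms shift_by_comp in metis)
  ultimately show ?thesis
    using assms mem unfolding gpd_witness_def by auto
qed

lemma gpd_witness_extend:
  assumes "is_filter L x" "is_filter L y" "gpd_witness L x q y \<alpha> \<beta>" "\<gamma> \<in> x" "prec L \<alpha> \<gamma>"
  obtains r where "r \<in> mor L" "src L \<alpha> = rng L r" "src L \<beta> = rng L r" "\<gamma> = comp L \<alpha> r"
    "comp L \<beta> r \<in> y" "gpd_witness L x q y \<gamma> (comp L \<beta> r)"
proof -
  obtain r where r: "r \<in> mor L" "src L \<alpha> = rng L r" "\<gamma> = comp L \<alpha> r"
    using assms(5) prec_iff by auto
  then have "r \<in> shift_by L y \<beta>"
    using assms(3,4) unfolding gpd_witness_def shift_by_def by auto
  then have "src L \<beta> = rng L r" "comp L \<beta> r \<in> y"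
    unfolding shift_by_def by auto
  moreover have "gpd_witness L x q y \<gamma> (comp L \<beta> r)"
    using gpd_witness_comp_iff[OF assms(1,2) _ _ r(1,2)] gpd_witness_mor[OF assms(3,1,2)] assms(3,4)
      r calculation by auto
  ultimately show ?thesis
    using that r by blast
qed

text \<open>This replaces the least upper bounds of the quasi-lattice order used in the paper.\<close>

lemma gpd_witness_common_extension:
  assumes "is_filter L x" "is_filter L y" "gpd_witness L x q y \<alpha> \<beta>" "gpd_witness L x q y \<alpha>' \<beta>'"
  obtains r r' where "r \<in> mor L" "src L \<alpha> = rng L r" "src L \<beta> = rng L r"
    "r' \<in> mor L" "src L \<alpha>' = rng L r'" "src L \<beta>' = rng L r'"
    "comp L \<alpha> r = comp L \<alpha>' r'" "comp L \<beta> r = comp L \<beta>' r'" "comp L \<alpha> r \<in> x" "comp L \<beta> r \<in> y"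
proof -
  obtain \<gamma> where \<gamma>: "\<gamma> \<in> x" "prec L \<alpha> \<gamma>" "prec L \<alpha>' \<gamma>"
    using filter_directed assms unfolding gpd_witness_def by blast
  obtain r where r: "r \<in> mor L" "src L \<alpha> = rng L r" "src L \<beta> = rng L r" "\<gamma> = comp L \<alpha> r"
      "comp L \<beta> r \<in> y" "gpd_witness L x q y \<gamma> (comp L \<beta> r)"
    using gpd_witness_extend[OF assms(1-3) \<gamma>(1,2)] by blast
  obtain r' where r': "r' \<in> mor L" "src L \<alpha>' = rng L r'" "src L \<beta>' = rng L r'" "\<gamma> = comp L \<alpha>' r'"
      "gpd_witness L x q y \<gamma> (comp L \<beta>' r')"
    using gpd_witness_extend[OF assms(1,2,4) \<gamma>(1,3)] by blast
  have "comp L \<beta> r = comp L \<beta>' r'"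
    using gpd_witness_right_unique[OF assms(2) r(6) r'(5)] .
  with r r' \<gamma>(1) show ?thesis
    using that by metis
qed

end

context P_graph begin

lemma openin_gpd_basic_set:
  "\<lbrakk>m \<in> P; n \<in> P; openin (pathtop L) U; openin (pathtop L) V\<rbrakk>
    \<Longrightarrow> openin (pathgpd_top P L) (gpd_basic_set P L m n U V)"
  unfolding pathgpd_top_def by (rule topology_generated_by_Basis) blast

lemma topspace_pathgpd_top [simp]: "topspace (pathgpd_top P L) = pathgpd P L"
proof -
  let ?S = "{gpd_basic_set P L m n U V | m n U V.
      m \<in> P \<and> n \<in> P \<and> openin (pathtop L) U \<and> openin (pathtop L) V}"
  have "\<Union>?S = pathgpd P L"
  proof
    show "\<Union>?S \<subseteq> pathgpd P L"
      using gpd_basic_set_subset by blast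
    show "pathgpd P L \<subseteq> \<Union>?S"
    proof
      fix g assume g: "g \<in> pathgpd P L"
      obtain x q y where gx: "g = (x, q, y)"
        by (cases g)
      then obtain \<alpha> \<beta> where xy: "x \<in> pathspace L" "y \<in> pathspace L" and w: "gpd_witness L x q y \<alpha> \<beta>"
        using g pathgpd_iff by auto
      then have "(x, q, y) \<in> gpd_basic_set P L (deg L \<alpha>) (deg L \<beta>) (pathspace L) (pathspace L)"
        unfolding gpd_basic_set_iff by blast
      moreover have "deg L \<alpha> \<in> P" "deg L \<beta> \<in> P"
        using gpd_witness_mor[OF w] xy pathspace_filter by auto
      moreover have "openin (pathtop L) (pathspace L)"
        using openin_topspace[of "pathtop L"] by simp
      ultimately show "g \<in> \<Union>?S"
        unfolding gx by blast
    qed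
  qed
  then show ?thesis
    unfolding pathgpd_top_def by simp
qed

lemma gpd_witness_transfer:
  assumes f: "is_filter L x" "is_filter L y" and w': "gpd_witness L x q y \<alpha>' \<beta>'"
    and mor: "\<alpha> \<in> mor L" "\<beta> \<in> mor L"
    and r: "r \<in> mor L" "src L \<alpha> = rng L r" "src L \<beta> = rng L r"
    and r': "r' \<in> mor L" "src L \<alpha>' = rng L r'" "src L \<beta>' = rng L r'"
    and ext: "comp L \<alpha> r = comp L \<alpha>' r'" "comp L \<beta> r = comp L \<beta>' r'"
      "comp L \<alpha> r \<in> x" "comp L \<beta> r \<in> y"
  shows "gpd_witness L x q y \<alpha> \<beta>"
proof -
  have "\<alpha>' \<in> mor L" "\<beta>' \<in> mor L"
    using gpd_witness_mor[OF w' f] by auto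
  then have "gpd_witness L x q y (comp L \<alpha>' r') (comp L \<beta>' r')"
    using gpd_witness_comp_iff[OF f _ _ r'] ext w' by simp
  then show ?thesis
    using gpd_witness_comp_iff[OF f mor r] ext by simp
qed

lemma gpd_basic_set_refine:
  assumes g: "(x, q, y) \<in> gpd_basic_set P L m n U V" and UV: "openin (pathtop L) U" "openin (pathtop L) V"
    and w': "gpd_witness L x q y \<alpha>' \<beta>'"
  obtains U' V' where "openin (pathtop L) U'" "openin (pathtop L) V'"
    "(x, q, y) \<in> gpd_basic_set P L (deg L \<alpha>') (deg L \<beta>') U' V'"
    "gpd_basic_set P L (deg L \<alpha>') (deg L \<beta>') U' V' \<subseteq> gpd_basic_set P L m n U V"
proof -
  obtain \<alpha> \<beta> where xy: "x \<in> pathspace L" "y \<in> pathspace L" "x \<in> U" "y \<in> V"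
      and w: "gpd_witness L x q y \<alpha> \<beta>" "deg L \<alpha> = m" "deg L \<beta> = n"
    using g unfolding gpd_basic_set_iff by blast
  have f: "is_filter L x" "is_filter L y"
    using xy pathspace_filter by auto
  obtain r r' where rr': "r \<in> mor L" "src L \<alpha> = rng L r" "src L \<beta> = rng L r"
      "r' \<in> mor L" "src L \<alpha>' = rng L r'" "src L \<beta>' = rng L r'"
      "comp L \<alpha> r = comp L \<alpha>' r'" "comp L \<beta> r = comp L \<beta>' r'" "comp L \<alpha> r \<in> x" "comp L \<beta> r \<in> y"
    using gpd_witness_common_extension[OF f w(1) w'] by blast
  have mor: "\<alpha> \<in> mor L" "\<beta> \<in> mor L" "\<alpha>' \<in> mor L" "\<beta>' \<in> mor L"
    using gpd_witness_mor f w(1) w' by blast+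
  define U' where "U' = U \<inter> {z \<in> pathspace L. comp L \<alpha> r \<in> z}"
  define V' where "V' = V \<inter> {z \<in> pathspace L. comp L \<beta> r \<in> z}"
  have "openin (pathtop L) U'" "openin (pathtop L) V'"
    unfolding U'_def V'_def using UV rr' mor by (simp_all add: openin_Int openin_pathtop_containing)
  moreover have "(x, q, y) \<in> gpd_basic_set P L (deg L \<alpha>') (deg L \<beta>') U' V'"
    unfolding gpd_basic_set_iff U'_def V'_def using xy w' rr'(9,10) by blast
  moreover have "gpd_basic_set P L (deg L \<alpha>') (deg L \<beta>') U' V' \<subseteq> gpd_basic_set P L m n U V"
  proof safe
    fix x' q' y' assume "(x', q', y') \<in> gpd_basic_set P L (deg L \<alpha>') (deg L \<beta>') U' V'"
    then obtain \<alpha>'' \<beta>'' where xy': "x' \<in> pathspace L" "y' \<in> pathspace L" "x' \<in> U'" "y' \<in> V'"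
        and w'': "gpd_witness L x' q' y' \<alpha>'' \<beta>''" "deg L \<alpha>'' = deg L \<alpha>'" "deg L \<beta>'' = deg L \<beta>'"
      unfolding gpd_basic_set_iff by blast
    have f': "is_filter L x'" "is_filter L y'"
      using xy' pathspace_filter by auto
    have ext: "comp L \<alpha> r \<in> x'" "comp L \<beta> r \<in> y'"
      using xy' unfolding U'_def V'_def by auto
    then have "\<alpha>' \<in> x'" "\<beta>' \<in> y'"
      using filter_hereditary[OF f'(1)] filter_hereditary[OF f'(2)] prec_comp rr' mor by metis+
    then have "\<alpha>'' = \<alpha>'" "\<beta>'' = \<beta>'"
      using filter_deg_unique f' w'' unfolding gpd_witness_def by blast+
    then have "gpd_witness L x' q' y' \<alpha> \<beta>"
      using gpd_witness_transfer[OF f' _ mor(1,2) rr'(1-8) ext] w''(1) by simp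
    then show "(x', q', y') \<in> gpd_basic_set P L m n U V"
      using xy' w(2,3) unfolding gpd_basic_set_iff U'_def V'_def by blast
  qed
  ultimately show ?thesis
    using that by blast
qed

lemma pathgpd_top_basic_nbhd:
  assumes "openin (pathgpd_top P L) S" "(x, q, y) \<in> S" "gpd_witness L x q y \<alpha> \<beta>"
  obtains U V where "openin (pathtop L) U" "openin (pathtop L) V"
    "(x, q, y) \<in> gpd_basic_set P L (deg L \<alpha>) (deg L \<beta>) U V"
    "gpd_basic_set P L (deg L \<alpha>) (deg L \<beta>) U V \<subseteq> S"
proof -
  let ?B = "gpd_basic_set P L (deg L \<alpha>) (deg L \<beta>)"
  have "generate_topology_on {gpd_basic_set P L m n U V | m n U V.
      m \<in> P \<and> n \<in> P \<and> openin (pathtop L) U \<and> openin (pathtop L) V} S"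
    using assms(1) unfolding pathgpd_top_def openin_topology_generated_by_iff .
  then have "\<exists>U V. openin (pathtop L) U \<and> openin (pathtop L) V \<and> (x, q, y) \<in> ?B U V \<and> ?B U V \<subseteq> S"
    using assms(2)
  proof (induction rule: generate_topology_on.induct)
    case (Int S1 S2)
    obtain U1 V1 where 1: "openin (pathtop L) U1" "openin (pathtop L) V1" "(x, q, y) \<in> ?B U1 V1"
        "?B U1 V1 \<subseteq> S1"
      using Int.IH(1) Int.prems by blast
    obtain U2 V2 where 2: "openin (pathtop L) U2" "openin (pathtop L) V2" "(x, q, y) \<in> ?B U2 V2"
        "?B U2 V2 \<subseteq> S2"
      using Int.IH(2) Int.prems by blast
    have "?B (U1 \<inter> U2) (V1 \<inter> V2) \<subseteq> S1 \<inter> S2"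
      using 1(4) 2(4) gpd_basic_set_mono[of "U1 \<inter> U2" _ "V1 \<inter> V2"] by blast
    moreover have "(x, q, y) \<in> ?B (U1 \<inter> U2) (V1 \<inter> V2)"
      using 1(3) 2(3) unfolding gpd_basic_set_def by auto
    ultimately show ?case
      using 1(1,2) 2(1,2) by (intro exI[of _ "U1 \<inter> U2"] exI[of _ "V1 \<inter> V2"]) auto
  next
    case (UN K)
    then obtain k where "k \<in> K" "(x, q, y) \<in> k"
      by blast
    then obtain U V where "openin (pathtop L) U" "openin (pathtop L) V" "(x, q, y) \<in> ?B U V" "?B U V \<subseteq> k"
      using UN.IH by blast
    with \<open>k \<in> K\<close> show ?case
      by blast
  next
    case (Basis s)
    then obtain m n U V where s: "s = gpd_basic_set P L m n U V" "openin (pathtop L) U" "openin (pathtop L) V"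
      by blast
    with Basis.prems obtain U' V' where "openin (pathtop L) U'" "openin (pathtop L) V'"
        "(x, q, y) \<in> ?B U' V'" "?B U' V' \<subseteq> s"
      using gpd_basic_set_refine[OF _ s(2,3) assms(3)] by blast
    then show ?case
      by blast
  qed simp
  then show ?thesis
    using that by blast
qed

lemma openin_pathgpd_topI:
  assumes "\<And>x q y. (x, q, y) \<in> S \<Longrightarrow> \<exists>m n U V. m \<in> P \<and> n \<in> P \<and> openin (pathtop L) U \<and>
    openin (pathtop L) V \<and> (x, q, y) \<in> gpd_basic_set P L m n U V \<and> gpd_basic_set P L m n U V \<subseteq> S"
  shows "openin (pathgpd_top P L) S"
proof (subst openin_subopen, intro ballI)
  fix g assume "g \<in> S"
  moreover obtain x q y where g: "g = (x, q, y)"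
    by (cases g)
  ultimately obtain m n U V where "m \<in> P" "n \<in> P" "openin (pathtop L) U" "openin (pathtop L) V"
      "g \<in> gpd_basic_set P L m n U V" "gpd_basic_set P L m n U V \<subseteq> S"
    using assms by blast
  moreover have "openin (pathgpd_top P L) (gpd_basic_set P L m n U V)"
    using calculation(1-4) by (rule openin_gpd_basic_set)
  ultimately show "\<exists>T. openin (pathgpd_top P L) T \<and> g \<in> T \<and> T \<subseteq> S"
    by blast
qed

lemma continuous_map_into_pathgpd:
  assumes "\<And>u. u \<in> topspace Y \<Longrightarrow> f u \<in> pathgpd P L"
    and "\<And>u x q y. u \<in> topspace Y \<Longrightarrow> f u = (x, q, y) \<Longrightarrow> \<exists>\<alpha> \<beta>. gpd_witness L x q y \<alpha> \<beta> \<and>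
      (\<forall>U V. openin (pathtop L) U \<and> openin (pathtop L) V \<and> f u \<in> gpd_basic_set P L (deg L \<alpha>) (deg L \<beta>) U V
        \<longrightarrow> (\<exists>N. openin Y N \<and> u \<in> N \<and> f ` N \<subseteq> gpd_basic_set P L (deg L \<alpha>) (deg L \<beta>) U V))"
  shows "continuous_map Y (pathgpd_top P L) f"
  unfolding continuous_map
proof (intro conjI allI impI)
  show "f ` topspace Y \<subseteq> topspace (pathgpd_top P L)"
    using assms(1) by auto
  fix S assume S: "openin (pathgpd_top P L) S"
  show "openin Y {u \<in> topspace Y. f u \<in> S}"
  proof (subst openin_subopen, intro ballI)
    fix u assume u: "u \<in> {u \<in> topspace Y. f u \<in> S}"
    obtain x q y where fu: "f u = (x, q, y)"
      by (cases "f u")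
    obtain \<alpha> \<beta> where w: "gpd_witness L x q y \<alpha> \<beta>" and
      nbhd: "\<forall>U V. openin (pathtop L) U \<and> openin (pathtop L) V \<and>
          f u \<in> gpd_basic_set P L (deg L \<alpha>) (deg L \<beta>) U V \<longrightarrow>
          (\<exists>N. openin Y N \<and> u \<in> N \<and> f ` N \<subseteq> gpd_basic_set P L (deg L \<alpha>) (deg L \<beta>) U V)"
      using assms(2)[of u x q y] u fu by blast
    have "(x, q, y) \<in> S"
      using u fu by simp
    then obtain U V where "openin (pathtop L) U" "openin (pathtop L) V"
        "(x, q, y) \<in> gpd_basic_set P L (deg L \<alpha>) (deg L \<beta>) U V"
        "gpd_basic_set P L (deg L \<alpha>) (deg L \<beta>) U V \<subseteq> S"
      using pathgpd_top_basic_nbhd[OF S _ w] by blast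
    then obtain N where N: "openin Y N" "u \<in> N" "f ` N \<subseteq> S"
      using nbhd fu by (metis subset_trans)
    then have "N \<subseteq> {u \<in> topspace Y. f u \<in> S}"
      using openin_subset by blast
    with N(1,2) show "\<exists>T. openin Y T \<and> u \<in> T \<and> T \<subseteq> {u \<in> topspace Y. f u \<in> S}"
      by blast
  qed
qed

end

context P_graph begin

lemma pathgpd_inverse: "(x, q, y) \<in> pathgpd P L \<Longrightarrow> (y, - q, x) \<in> pathgpd P L"
  unfolding pathgpd_iff using gpd_witness_inverse by blast

lemma pathgpd_unit: assumes "x \<in> pathspace L" shows "(x, 0, x) \<in> pathgpd P L"
proof -
  obtain \<alpha> where "\<alpha> \<in> x"
    using filter_nonempty pathspace_filter assms by blast
  then show ?thesis
    unfolding pathgpd_iff using assms gpd_witness_refl by blast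
qed

lemma pathgpd_composable_witnesses:
  assumes "(x, q, y) \<in> pathgpd P L" "(y, r, z) \<in> pathgpd P L"
  obtains \<alpha> \<beta> \<delta> where "gpd_witness L x q y \<alpha> \<beta>" "gpd_witness L y r z \<beta> \<delta>"
proof -
  have f: "is_filter L x" "is_filter L y" "is_filter L z"
    using assms pathspace_filter unfolding pathgpd_iff by auto
  obtain \<alpha> \<beta> \<gamma> \<delta> where w: "gpd_witness L x q y \<alpha> \<beta>" "gpd_witness L y r z \<gamma> \<delta>"
    using assms unfolding pathgpd_iff by blast
  then obtain \<eta> where \<eta>: "\<eta> \<in> y" "prec L \<beta> \<eta>" "prec L \<gamma> \<eta>"
    using filter_directed[OF f(2)] unfolding gpd_witness_def by blast
  obtain s where "gpd_witness L y (- q) x \<eta> (comp L \<alpha> s)"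
    using gpd_witness_extend[OF f(2,1) gpd_witness_inverse[OF w(1)] \<eta>(1,2)] by blast
  then have "gpd_witness L x q y (comp L \<alpha> s) \<eta>"
    using gpd_witness_inverse by fastforce
  moreover obtain s' where "gpd_witness L y r z \<eta> (comp L \<delta> s')"
    using gpd_witness_extend[OF f(2,3) w(2) \<eta>(1,3)] by blast
  ultimately show ?thesis
    using that by blast
qed

lemma pathgpd_comp: "(x, q, y) \<in> pathgpd P L \<Longrightarrow> (y, r, z) \<in> pathgpd P L \<Longrightarrow> (x, q + r, z) \<in> pathgpd P L"
proof -
  assume "(x, q, y) \<in> pathgpd P L" "(y, r, z) \<in> pathgpd P L"
  moreover from this obtain \<alpha> \<beta> \<delta> where "gpd_witness L x q y \<alpha> \<beta>" "gpd_witness L y r z \<beta> \<delta>"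
    by (rule pathgpd_composable_witnesses)
  ultimately show ?thesis
    unfolding pathgpd_iff using gpd_witness_trans by blast
qed

lemma gpd_basic_set_inverse_iff:
  "(y, - q, x) \<in> gpd_basic_set P L n m V U \<longleftrightarrow> (x, q, y) \<in> gpd_basic_set P L m n U V"
  unfolding gpd_basic_set_iff using gpd_witness_inverse by fastforce

lemma continuous_map_gpd_inverse: "continuous_map (pathgpd_top P L) (pathgpd_top P L) tg_inv"
proof (rule continuous_map_into_pathgpd)
  fix u assume "u \<in> topspace (pathgpd_top P L)"
  then show "tg_inv u \<in> pathgpd P L"
    using pathgpd_inverse unfolding tg_inv_def by (cases u) simp
next
  fix u x' q' y' assume u: "u \<in> topspace (pathgpd_top P L)" and inv: "tg_inv u = (x', q', y')"
  obtain x q y where ux: "u = (x, q, y)"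
    by (cases u)
  then have "(x, q, y) \<in> pathgpd P L" and inv': "x' = y" "q' = - q" "y' = x"
    using u inv unfolding tg_inv_def by auto
  then obtain \<alpha> \<beta> where xy: "x \<in> pathspace L" "y \<in> pathspace L" and w: "gpd_witness L x q y \<alpha> \<beta>"
    unfolding pathgpd_iff by blast
  have w_inv: "gpd_witness L x' q' y' \<beta> \<alpha>"
    using gpd_witness_inverse[OF w] inv' by simp
  show "\<exists>\<alpha> \<beta>. gpd_witness L x' q' y' \<alpha> \<beta> \<and>
      (\<forall>U V. openin (pathtop L) U \<and> openin (pathtop L) V \<and> tg_inv u \<in> gpd_basic_set P L (deg L \<alpha>) (deg L \<beta>) U V
        \<longrightarrow> (\<exists>N. openin (pathgpd_top P L) N \<and> u \<in> N \<and> tg_inv ` N \<subseteq> gpd_basic_set P L (deg L \<alpha>) (deg L \<beta>) U V))"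
  proof (intro exI conjI allI impI)
    fix U V assume UV: "openin (pathtop L) U \<and> openin (pathtop L) V \<and>
        tg_inv u \<in> gpd_basic_set P L (deg L \<beta>) (deg L \<alpha>) U V"
    have "deg L \<alpha> \<in> P" "deg L \<beta> \<in> P"
      using gpd_witness_mor[OF w] xy pathspace_filter by auto
    then show "openin (pathgpd_top P L) (gpd_basic_set P L (deg L \<alpha>) (deg L \<beta>) V U)"
      using UV openin_gpd_basic_set by blast
    show "u \<in> gpd_basic_set P L (deg L \<alpha>) (deg L \<beta>) V U"
      using UV gpd_basic_set_inverse_iff ux unfolding tg_inv_def by auto
    show "tg_inv ` gpd_basic_set P L (deg L \<alpha>) (deg L \<beta>) V U \<subseteq> gpd_basic_set P L (deg L \<beta>) (deg L \<alpha>) U V"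
      using gpd_basic_set_inverse_iff gpd_basic_set_subset unfolding tg_inv_def by fastforce
  qed (rule w_inv)
qed

lemma gpd_basic_set_containing:
  assumes "(x, q, y) \<in> pathgpd P L" "x \<in> U" "y \<in> V"
  obtains m n where "m \<in> P" "n \<in> P" "(x, q, y) \<in> gpd_basic_set P L m n U V"
proof -
  obtain \<alpha> \<beta> where "x \<in> pathspace L" "y \<in> pathspace L" "gpd_witness L x q y \<alpha> \<beta>"
    using assms(1) unfolding pathgpd_iff by blast
  moreover from this have "deg L \<alpha> \<in> P" "deg L \<beta> \<in> P"
    using gpd_witness_mor pathspace_filter by auto
  ultimately show ?thesis
    using that assms unfolding gpd_basic_set_iff by blast
qed

lemma continuous_map_gpd_range: "continuous_map (pathgpd_top P L) (pathtop L) fst"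
  unfolding continuous_map
proof (intro conjI allI impI)
  show "fst ` topspace (pathgpd_top P L) \<subseteq> topspace (pathtop L)"
    by (auto simp: pathgpd_iff)
  fix W assume W: "openin (pathtop L) W"
  show "openin (pathgpd_top P L) {g \<in> topspace (pathgpd_top P L). fst g \<in> W}"
  proof (rule openin_pathgpd_topI)
    fix x q y assume "(x, q, y) \<in> {g \<in> topspace (pathgpd_top P L). fst g \<in> W}"
    then obtain m n where "m \<in> P" "n \<in> P" "(x, q, y) \<in> gpd_basic_set P L m n W (pathspace L)"
      using gpd_basic_set_containing by (force simp: pathgpd_iff)
    moreover have "gpd_basic_set P L m n W (pathspace L) \<subseteq> {g \<in> topspace (pathgpd_top P L). fst g \<in> W}"
      unfolding gpd_basic_set_def by auto
    moreover have "openin (pathtop L) (pathspace L)"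
      using openin_topspace[of "pathtop L"] by simp
    ultimately show "\<exists>m n U V. m \<in> P \<and> n \<in> P \<and> openin (pathtop L) U \<and> openin (pathtop L) V \<and>
        (x, q, y) \<in> gpd_basic_set P L m n U V \<and>
        gpd_basic_set P L m n U V \<subseteq> {g \<in> topspace (pathgpd_top P L). fst g \<in> W}"
      using W by blast
  qed
qed

lemma gpd_basic_set_comp:
  assumes "(x, q, y) \<in> gpd_basic_set P L a t U V'" "(y, r, z) \<in> gpd_basic_set P L t d U' V"
  shows "(x, q + r, z) \<in> gpd_basic_set P L a d U V"
proof -
  obtain \<alpha> \<beta> \<beta>' \<delta> where "gpd_witness L x q y \<alpha> \<beta>" "gpd_witness L y r z \<beta>' \<delta>"
      "deg L \<alpha> = a" "deg L \<beta> = t" "deg L \<beta>' = t" "deg L \<delta> = d"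
    and "x \<in> pathspace L" "y \<in> pathspace L" "z \<in> pathspace L" "x \<in> U" "z \<in> V"
    using assms unfolding gpd_basic_set_iff by blast
  moreover from this have "\<beta>' = \<beta>"
    using filter_deg_unique pathspace_filter unfolding gpd_witness_def by metis
  ultimately show ?thesis
    unfolding gpd_basic_set_iff using gpd_witness_trans by blast
qed

lemma pathspace_deg_zero: assumes "x \<in> pathspace L" obtains v where "v \<in> x" "deg L v = 0"
proof -
  have x: "is_filter L x"
    using assms pathspace_filter by blast
  then obtain l where "l \<in> x"
    using filter_nonempty by blast
  moreover from this have "l \<in> mor L"
    using x filter_subset by blast
  ultimately have "rng L l \<in> x" "deg L (rng L l) = 0"
    using filter_hereditary[OF x _ rng_prec] by auto
  then show ?thesis
    using that by blast
qed

lemma unit_in_gpd_basic_set: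
  "x \<in> pathspace L \<Longrightarrow> x \<in> U \<Longrightarrow> x \<in> V \<Longrightarrow> (x, 0, x) \<in> gpd_basic_set P L 0 0 U V"
  unfolding gpd_basic_set_iff by (metis gpd_witness_refl pathspace_deg_zero)

lemma continuous_map_gpd_unit: "continuous_map (pathtop L) (pathgpd_top P L) (\<lambda>x. (x, 0, x))"
proof (rule continuous_map_into_pathgpd)
  fix u assume "u \<in> topspace (pathtop L)"
  then show "(u, 0, u) \<in> pathgpd P L"
    using pathgpd_unit by simp
next
  fix u x y and q :: 'q assume u: "u \<in> topspace (pathtop L)" and eq: "(u, 0, u) = (x, q, y)"
  obtain v where v: "v \<in> u" "deg L v = 0"
    using pathspace_deg_zero u by auto
  show "\<exists>\<alpha> \<beta>. gpd_witness L x q y \<alpha> \<beta> \<and>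
      (\<forall>U V. openin (pathtop L) U \<and> openin (pathtop L) V \<and> (u, 0, u) \<in> gpd_basic_set P L (deg L \<alpha>) (deg L \<beta>) U V
        \<longrightarrow> (\<exists>N. openin (pathtop L) N \<and> u \<in> N \<and> (\<lambda>x. (x, 0, x)) ` N \<subseteq> gpd_basic_set P L (deg L \<alpha>) (deg L \<beta>) U V))"
  proof (intro exI conjI allI impI)
    have "x = u" "q = 0" "y = u"
      using eq by auto
    then show "gpd_witness L x q y v v"
      using gpd_witness_refl[OF v(1)] by simp
    fix U V assume UV: "openin (pathtop L) U \<and> openin (pathtop L) V \<and>
        (u, 0, u) \<in> gpd_basic_set P L (deg L v) (deg L v) U V"
    then show "openin (pathtop L) (U \<inter> V)" "u \<in> U \<inter> V"
      unfolding gpd_basic_set_iff by auto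
    show "(\<lambda>x. (x, 0, x)) ` (U \<inter> V) \<subseteq> gpd_basic_set P L (deg L v) (deg L v) U V"
      using UV openin_subset unit_in_gpd_basic_set v(2) by fastforce
  qed
qed

lemma tg_composable_pathgpd_top:
  "tg_composable (pathgpd_top P L) = {(g, h). g \<in> pathgpd P L \<and> h \<in> pathgpd P L \<and> snd (snd g) = fst h}"
  unfolding tg_composable_def by simp

lemma continuous_map_gpd_mult:
  "continuous_map
    (subtopology (prod_topology (pathgpd_top P L) (pathgpd_top P L)) (tg_composable (pathgpd_top P L)))
    (pathgpd_top P L) tg_mult"
proof (rule continuous_map_into_pathgpd)
  let ?Y = "subtopology (prod_topology (pathgpd_top P L) (pathgpd_top P L)) (tg_composable (pathgpd_top P L))"
  note comp = tg_composable_pathgpd_top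
  {
    fix u assume u: "u \<in> topspace ?Y"
    then obtain x q y r z where ux: "u = ((x, q, y), (y, r, z))"
        "(x, q, y) \<in> pathgpd P L" "(y, r, z) \<in> pathgpd P L"
      unfolding comp by auto
    then show "tg_mult u \<in> pathgpd P L"
      using pathgpd_comp unfolding tg_mult_def by simp
  }
  note mult_mem = this
  fix u x' q' z' assume u: "u \<in> topspace ?Y" and mult: "tg_mult u = (x', q', z')"
  then obtain x q y r z where ux: "u = ((x, q, y), (y, r, z))"
      "(x, q, y) \<in> pathgpd P L" "(y, r, z) \<in> pathgpd P L"
    unfolding comp by auto
  then have mult': "x' = x" "q' = q + r" "z' = z"
    using mult unfolding tg_mult_def by auto
  obtain \<alpha> \<beta> \<delta> where w: "gpd_witness L x q y \<alpha> \<beta>" "gpd_witness L y r z \<beta> \<delta>"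
    using pathgpd_composable_witnesses[OF ux(2,3)] by blast
  have X: "x \<in> pathspace L" "y \<in> pathspace L" "z \<in> pathspace L" "openin (pathtop L) (pathspace L)"
    using ux(2,3) openin_topspace[of "pathtop L"] unfolding pathgpd_iff by auto
  then have P: "deg L \<alpha> \<in> P" "deg L \<beta> \<in> P" "deg L \<delta> \<in> P"
    using gpd_witness_mor w pathspace_filter by (metis deg_in_P)+
  show "\<exists>\<alpha> \<beta>. gpd_witness L x' q' z' \<alpha> \<beta> \<and>
      (\<forall>U V. openin (pathtop L) U \<and> openin (pathtop L) V \<and> tg_mult u \<in> gpd_basic_set P L (deg L \<alpha>) (deg L \<beta>) U V
        \<longrightarrow> (\<exists>N. openin ?Y N \<and> u \<in> N \<and> tg_mult ` N \<subseteq> gpd_basic_set P L (deg L \<alpha>) (deg L \<beta>) U V))"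
  proof (intro exI conjI allI impI)
    show "gpd_witness L x' q' z' \<alpha> \<delta>"
      using gpd_witness_trans[OF w] mult' by simp
    fix U V assume UV: "openin (pathtop L) U \<and> openin (pathtop L) V \<and>
        tg_mult u \<in> gpd_basic_set P L (deg L \<alpha>) (deg L \<delta>) U V"
    let ?N = "(gpd_basic_set P L (deg L \<alpha>) (deg L \<beta>) U (pathspace L) \<times>
        gpd_basic_set P L (deg L \<beta>) (deg L \<delta>) (pathspace L) V) \<inter> tg_composable (pathgpd_top P L)"
    have "openin (prod_topology (pathgpd_top P L) (pathgpd_top P L))
        (gpd_basic_set P L (deg L \<alpha>) (deg L \<beta>) U (pathspace L) \<times>
         gpd_basic_set P L (deg L \<beta>) (deg L \<delta>) (pathspace L) V)"
      unfolding openin_prod_Times_iff using openin_gpd_basic_set P UV X(4) by auto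
    then show "openin ?Y ?N"
      by (rule openin_subtopology_Int)
    have "x \<in> U" "z \<in> V"
      using UV mult mult' by (auto simp: gpd_basic_set_iff)
    then have "(x, q, y) \<in> gpd_basic_set P L (deg L \<alpha>) (deg L \<beta>) U (pathspace L)"
      "(y, r, z) \<in> gpd_basic_set P L (deg L \<beta>) (deg L \<delta>) (pathspace L) V"
      using X w unfolding gpd_basic_set_iff by blast+
    then show "u \<in> ?N"
      using ux u by auto
    show "tg_mult ` ?N \<subseteq> gpd_basic_set P L (deg L \<alpha>) (deg L \<delta>) U V"
      using gpd_basic_set_comp unfolding comp tg_mult_def by fastforce
  qed
qed

lemma continuous_map_gpd_source: "continuous_map (pathgpd_top P L) (pathgpd_top P L) tg_src"
proof -
  have eq: "tg_src = tg_mult \<circ> (\<lambda>g. (tg_inv g, g))"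
    unfolding tg_src_def tg_mult_def tg_inv_def by auto
  have "(tg_inv g, g) \<in> tg_composable (pathgpd_top P L)" if "g \<in> topspace (pathgpd_top P L)" for g
    using that pathgpd_inverse unfolding tg_composable_pathgpd_top tg_inv_def by (cases g) simp
  then have "continuous_map (pathgpd_top P L)
      (subtopology (prod_topology (pathgpd_top P L) (pathgpd_top P L)) (tg_composable (pathgpd_top P L)))
      (\<lambda>g. (tg_inv g, g))"
    unfolding continuous_map_in_subtopology
    using continuous_map_pairedI[OF continuous_map_gpd_inverse continuous_map_id] by auto
  then show ?thesis
    unfolding eq by (rule continuous_map_compose[OF _ continuous_map_gpd_mult])
qed

lemma gpd_basic_set_disjnt:
  "disjnt U U' \<or> disjnt V V' \<or> m + - n \<noteq> m' + - n' \<Longrightarrow>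
    disjnt (gpd_basic_set P L m n U V) (gpd_basic_set P L m' n' U' V')"
  unfolding disjnt_def gpd_basic_set_def by auto

lemma Hausdorff_space_pathgpd_top: "Hausdorff_space (pathgpd_top P L)"
  unfolding Hausdorff_space_def topspace_pathgpd_top
proof (intro allI impI)
  fix g g' assume h: "g \<in> pathgpd P L \<and> g' \<in> pathgpd P L \<and> g \<noteq> g'"
  obtain x q y x' q' y' where gx: "g = (x, q, y)" "g' = (x', q', y')"
    by (cases g, cases g')
  have G: "(x, q, y) \<in> pathgpd P L" "(x', q', y') \<in> pathgpd P L"
    using h gx by auto
  then have X: "x \<in> pathspace L" "y \<in> pathspace L" "x' \<in> pathspace L" "y' \<in> pathspace L"
    by (simp_all add: pathgpd_iff)
  obtain m n where mn: "m \<in> P" "n \<in> P" "(x, q, y) \<in> gpd_basic_set P L m n (pathspace L) (pathspace L)"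
    using G(1) X(1,2) by (rule gpd_basic_set_containing)
  obtain m' n' where mn': "m' \<in> P" "n' \<in> P" "(x', q', y') \<in> gpd_basic_set P L m' n' (pathspace L) (pathspace L)"
    using G(2) X(3,4) by (rule gpd_basic_set_containing)
  have open_X: "openin (pathtop L) (pathspace L)"
    using openin_topspace[of "pathtop L"] by simp
  have separate: "\<exists>U U'. openin (pathtop L) U \<and> openin (pathtop L) U' \<and> a \<in> U \<and> b \<in> U' \<and> disjnt U U'"
    if "a \<in> pathspace L" "b \<in> pathspace L" "a \<noteq> b" for a b
    using Hausdorff_space_pathtop that unfolding Hausdorff_space_def by simp
  obtain U U' V V' where UV: "openin (pathtop L) U" "openin (pathtop L) U'" "openin (pathtop L) V"
      "openin (pathtop L) V'" "x \<in> U" "x' \<in> U'" "y \<in> V" "y' \<in> V'" "disjnt U U' \<or> disjnt V V' \<or> q \<noteq> q'"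
  proof (cases "x = x' \<and> y = y'")
    case True
    then show ?thesis
      using that[OF open_X open_X open_X open_X] h gx X by auto
  next
    case False
    then consider "x \<noteq> x'" | "y \<noteq> y'"
      by blast
    then show ?thesis
    proof cases
      case 1
      then show ?thesis
        using separate[OF X(1,3)] that[OF _ _ open_X open_X] X by blast
    next
      case 2
      then show ?thesis
        using separate[OF X(2,4)] that[OF open_X open_X] X by blast
    qed
  qed
  have "q = m + - n" "q' = m' + - n'"
    using mn(3) mn'(3) unfolding gpd_basic_set_def by simp_all
  then have "disjnt (gpd_basic_set P L m n U V) (gpd_basic_set P L m' n' U' V')"
    using UV(9) by (intro gpd_basic_set_disjnt) auto
  moreover have "g \<in> gpd_basic_set P L m n U V" "g' \<in> gpd_basic_set P L m' n' U' V'"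
    using mn(3) mn'(3) UV(5-8) unfolding gx gpd_basic_set_def by auto
  moreover have "openin (pathgpd_top P L) (gpd_basic_set P L m n U V)"
    "openin (pathgpd_top P L) (gpd_basic_set P L m' n' U' V')"
    using mn mn' UV(1-4) by (simp_all add: openin_gpd_basic_set)
  ultimately show "\<exists>U V. openin (pathgpd_top P L) U \<and> openin (pathgpd_top P L) V \<and> g \<in> U \<and> g' \<in> V \<and> disjnt U V"
    by (intro exI conjI)
qed

lemma second_countable_pathgpd_top: "second_countable (pathgpd_top P L)"
proof -
  obtain \<B> where \<B>: "countable \<B>" "\<forall>V\<in>\<B>. openin (pathtop L) V"
      "\<forall>U x. openin (pathtop L) U \<and> x \<in> U \<longrightarrow> (\<exists>V\<in>\<B>. x \<in> V \<and> V \<subseteq> U)"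
    using second_countable_pathtop unfolding second_countable_def by blast
  let ?D = "deg L ` mor L"
  let ?B = "(\<lambda>(m, n, U, V). gpd_basic_set P L m n U V) ` (?D \<times> ?D \<times> \<B> \<times> \<B>)"
  show ?thesis
    unfolding second_countable_def
  proof (intro exI conjI)
    show "countable ?B"
      using \<B>(1) countable_mor by auto
    show "\<forall>V\<in>?B. openin (pathgpd_top P L) V"
      using \<B>(2) openin_gpd_basic_set by auto
    show "\<forall>S g. openin (pathgpd_top P L) S \<and> g \<in> S \<longrightarrow> (\<exists>V\<in>?B. g \<in> V \<and> V \<subseteq> S)"
    proof (intro allI impI)
      fix S g assume Sg: "openin (pathgpd_top P L) S \<and> g \<in> S"
      obtain x q y where gx: "g = (x, q, y)"
        by (cases g)
      have "g \<in> pathgpd P L"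
        using Sg openin_subset by fastforce
      then obtain \<alpha> \<beta> where "x \<in> pathspace L" "y \<in> pathspace L" and w: "gpd_witness L x q y \<alpha> \<beta>"
        unfolding gx pathgpd_iff by blast
      then have D: "deg L \<alpha> \<in> ?D" "deg L \<beta> \<in> ?D"
        using gpd_witness_mor pathspace_filter by blast+
      obtain U V where UV: "openin (pathtop L) U" "openin (pathtop L) V"
          "(x, q, y) \<in> gpd_basic_set P L (deg L \<alpha>) (deg L \<beta>) U V" "gpd_basic_set P L (deg L \<alpha>) (deg L \<beta>) U V \<subseteq> S"
        using pathgpd_top_basic_nbhd[of S x q y \<alpha> \<beta>] Sg gx w by blast
      then have "x \<in> U" "y \<in> V"
        unfolding gpd_basic_set_iff by auto
      then obtain U0 V0 where UV0: "U0 \<in> \<B>" "x \<in> U0" "U0 \<subseteq> U" "V0 \<in> \<B>" "y \<in> V0" "V0 \<subseteq> V"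
        using \<B>(3) UV(1,2) by meson
      have "g \<in> gpd_basic_set P L (deg L \<alpha>) (deg L \<beta>) U0 V0"
        using UV(3) UV0 unfolding gx gpd_basic_set_iff by blast
      moreover have "gpd_basic_set P L (deg L \<alpha>) (deg L \<beta>) U0 V0 \<in> ?B"
        using D UV0 by (intro rev_image_eqI[of "(deg L \<alpha>, deg L \<beta>, U0, V0)"]) auto
      moreover have "gpd_basic_set P L (deg L \<alpha>) (deg L \<beta>) U0 V0 \<subseteq> S"
        using subset_trans[OF gpd_basic_set_mono[OF UV0(3,6)] UV(4)] .
      ultimately show "\<exists>V\<in>?B. g \<in> V \<and> V \<subseteq> S"
        by (intro bexI[of _ "gpd_basic_set P L (deg L \<alpha>) (deg L \<beta>) U0 V0"] conjI)
    qed
  qed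
qed

end

section \<open>Local inverses of the source map\<close>

definition replace_prefix :: "('a, 'q) pgraph \<Rightarrow> 'a \<Rightarrow> 'a \<Rightarrow> 'a set \<Rightarrow> 'a set" where
  "replace_prefix L \<alpha> \<beta> y = prepend L \<alpha> (shift_by L y \<beta>)"

definition source_section :: "('a, 'q::group_add) pgraph \<Rightarrow> 'a \<Rightarrow> 'a \<Rightarrow> 'a set \<Rightarrow> 'a set \<times> 'q \<times> 'a set" where
  "source_section L \<alpha> \<beta> y = (replace_prefix L \<alpha> \<beta> y, deg L \<alpha> + - deg L \<beta>, y)"

context P_graph begin

lemma gpd_witness_FA:
  assumes "(x, q, y) \<in> pathgpd P L"
  obtains \<alpha> \<beta> where "gpd_witness L x q y \<alpha> \<beta>" "\<alpha> \<in> FA L" "\<beta> \<in> FA L"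
proof -
  have X: "x \<in> pathspace L" "y \<in> pathspace L"
    using assms unfolding pathgpd_iff by auto
  then have f: "is_filter L x" "is_filter L y"
    using pathspace_filter by auto
  obtain \<alpha>0 \<beta>0 where w0: "gpd_witness L x q y \<alpha>0 \<beta>0"
    using assms unfolding pathgpd_iff by blast
  obtain \<phi> \<psi> where \<phi>: "\<phi> \<in> x" "\<phi> \<in> FA L" and \<psi>: "\<psi> \<in> y" "\<psi> \<in> FA L"
    using pathspace_FA X by blast
  obtain \<gamma> where \<gamma>: "\<gamma> \<in> x" "prec L \<alpha>0 \<gamma>" "prec L \<phi> \<gamma>"
    using filter_directed[OF f(1) _ \<phi>(1)] w0 unfolding gpd_witness_def by blast
  obtain r where w1: "gpd_witness L x q y \<gamma> (comp L \<beta>0 r)"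
    using gpd_witness_extend[OF f w0 \<gamma>(1,2)] by blast
  obtain \<eta> where \<eta>: "\<eta> \<in> y" "prec L (comp L \<beta>0 r) \<eta>" "prec L \<psi> \<eta>"
    using filter_directed[OF f(2) _ \<psi>(1)] w1 unfolding gpd_witness_def by blast
  obtain r' where "r' \<in> mor L" "src L \<gamma> = rng L r'" "gpd_witness L y (- q) x \<eta> (comp L \<gamma> r')"
    using gpd_witness_extend[OF f(2,1) gpd_witness_inverse[OF w1] \<eta>(1,2)] by blast
  moreover from this have "gpd_witness L x q y (comp L \<gamma> r') \<eta>"
    using gpd_witness_inverse by fastforce
  moreover have "\<gamma> \<in> mor L"
    using \<gamma> f(1) filter_subset by blast
  ultimately have "comp L \<gamma> r' \<in> FA L"
    using FA_prec[OF FA_prec[OF \<phi>(2) \<gamma>(3)] prec_comp] by blast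
  moreover have "\<eta> \<in> FA L"
    using FA_prec[OF \<psi>(2) \<eta>(3)] .
  ultimately show ?thesis
    using that \<open>gpd_witness L x q y (comp L \<gamma> r') \<eta>\<close> by blast
qed

lemma replace_prefix_witness:
  assumes "y \<in> pathspace L" "\<beta> \<in> y" "\<alpha> \<in> FA L" "src L \<alpha> = src L \<beta>"
  shows "replace_prefix L \<alpha> \<beta> y \<in> pathspace L"
    and "gpd_witness L (replace_prefix L \<alpha> \<beta> y) (deg L \<alpha> + - deg L \<beta>) y \<alpha> \<beta>"
proof -
  have \<alpha>: "\<alpha> \<in> mor L"
    using assms(3) unfolding FA_def by auto
  have z: "is_filter L (shift_by L y \<beta>)" "src L \<alpha> \<in> shift_by L y \<beta>"
    using shift_by_filter src_mem_shift_by pathspace_filter assms by auto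
  then have "\<alpha> \<in> replace_prefix L \<alpha> \<beta> y"
    unfolding replace_prefix_def using prepend_filter(2) \<alpha> by blast
  with z show "replace_prefix L \<alpha> \<beta> y \<in> pathspace L"
    unfolding replace_prefix_def using prepend_filter(1) \<alpha> pathspaceI assms(3) by blast
  show "gpd_witness L (replace_prefix L \<alpha> \<beta> y) (deg L \<alpha> + - deg L \<beta>) y \<alpha> \<beta>"
    using \<open>\<alpha> \<in> replace_prefix L \<alpha> \<beta> y\<close> assms(2) shift_by_prepend[OF z(1) \<alpha> z(2)]
    unfolding gpd_witness_def replace_prefix_def by blast
qed

lemma replace_prefix_unique:
  "is_filter L x \<Longrightarrow> gpd_witness L x q y \<alpha> \<beta> \<Longrightarrow> x = replace_prefix L \<alpha> \<beta> y"
  unfolding gpd_witness_def replace_prefix_def using prepend_shift_by by metis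

text \<open>Continuity of replace_prefix rests on this lemma; it is the reason why witnesses
  are chosen in FA(\<Lambda>).\<close>

lemma replace_prefix_finite_test:
  assumes "\<alpha> \<in> FA L" "\<beta> \<in> mor L" "src L \<alpha> = src L \<beta>" "\<mu> \<in> mor L"
  obtains R where "finite R" "\<And>r. r \<in> R \<Longrightarrow> r \<in> mor L \<and> src L \<beta> = rng L r"
    "\<And>y. is_filter L y \<Longrightarrow> \<beta> \<in> y \<Longrightarrow> \<mu> \<in> replace_prefix L \<alpha> \<beta> y \<longleftrightarrow> (\<exists>r\<in>R. comp L \<beta> r \<in> y)"
proof -
  have \<alpha>: "\<alpha> \<in> mor L"
    using assms(1) unfolding FA_def by auto
  obtain J where J: "finite J" "J \<subseteq> mor L" "\<And>k. prec L \<alpha> k \<and> prec L \<mu> k \<longleftrightarrow> (\<exists>j\<in>J. prec L j k)"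
    using FA_common_extensions[OF assms(1) prec_refl[OF \<alpha>] assms(4)] by blast
  have "\<forall>j\<in>J. \<exists>r. r \<in> mor L \<and> src L \<alpha> = rng L r \<and> j = comp L \<alpha> r"
    using J prec_refl prec_iff by blast
  then obtain f where f: "\<And>j. j \<in> J \<Longrightarrow> f j \<in> mor L \<and> src L \<alpha> = rng L (f j) \<and> j = comp L \<alpha> (f j)"
    by metis
  have \<mu>J: "prec L \<mu> j" if "j \<in> J" for j
    using J that prec_refl by blast
  have test: "\<mu> \<in> replace_prefix L \<alpha> \<beta> y \<longleftrightarrow> (\<exists>j\<in>J. comp L \<beta> (f j) \<in> y)"
    if y: "is_filter L y" "\<beta> \<in> y" for y
  proof
    assume "\<mu> \<in> replace_prefix L \<alpha> \<beta> y"
    then obtain n where n: "n \<in> shift_by L y \<beta>" "n \<in> mor L" "src L \<alpha> = rng L n" "prec L \<mu> (comp L \<alpha> n)"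
      unfolding replace_prefix_def prepend_def by auto
    then obtain j where j: "j \<in> J" "prec L j (comp L \<alpha> n)"
      using J(3) prec_comp \<alpha> by blast
    then have "prec L (f j) n"
      using prec_comp_cancel[of \<alpha> "f j" n] f \<alpha> n by auto
    then have "f j \<in> shift_by L y \<beta>"
      using filter_hereditary[OF shift_by_filter[OF y] n(1)] by blast
    with j show "\<exists>j\<in>J. comp L \<beta> (f j) \<in> y"
      unfolding shift_by_def by auto
  next
    assume "\<exists>j\<in>J. comp L \<beta> (f j) \<in> y"
    then obtain j where "j \<in> J" "comp L \<beta> (f j) \<in> y"
      by blast
    then show "\<mu> \<in> replace_prefix L \<alpha> \<beta> y"
      using f \<mu>J assms(3) unfolding replace_prefix_def prepend_def shift_by_def by fastforce
  qed
  show ?thesis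
  proof (rule that[of "f ` J"])
    show "finite (f ` J)"
      using J(1) by simp
    show "r \<in> mor L \<and> src L \<beta> = rng L r" if "r \<in> f ` J" for r
      using that f assms(3) by auto
    show "\<mu> \<in> replace_prefix L \<alpha> \<beta> y \<longleftrightarrow> (\<exists>r\<in>f ` J. comp L \<beta> r \<in> y)" if "is_filter L y" "\<beta> \<in> y" for y
      using test[OF that] by simp
  qed
qed

lemma continuous_map_replace_prefix:
  assumes "\<alpha> \<in> FA L" "\<beta> \<in> mor L" "src L \<alpha> = src L \<beta>"
  shows "continuous_map (subtopology (pathtop L) {y \<in> pathspace L. \<beta> \<in> y}) (pathtop L) (replace_prefix L \<alpha> \<beta>)"
proof (rule continuous_map_into_pathtop)
  let ?Z = "{y \<in> pathspace L. \<beta> \<in> y}"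
  let ?Y = "subtopology (pathtop L) ?Z"
  have topY: "topspace ?Y = ?Z"
    by auto
  show "replace_prefix L \<alpha> \<beta> y \<in> pathspace L" if "y \<in> topspace ?Y" for y
    using replace_prefix_witness(1) assms that topY by auto
  fix \<mu> assume "\<mu> \<in> mor L"
  obtain R where R: "finite R" "\<And>r. r \<in> R \<Longrightarrow> r \<in> mor L \<and> src L \<beta> = rng L r"
      "\<And>y. is_filter L y \<Longrightarrow> \<beta> \<in> y \<Longrightarrow> \<mu> \<in> replace_prefix L \<alpha> \<beta> y \<longleftrightarrow> (\<exists>r\<in>R. comp L \<beta> r \<in> y)"
    using replace_prefix_finite_test[OF assms \<open>\<mu> \<in> mor L\<close>] by blast
  let ?C = "comp L \<beta> ` R"
  have C: "?C \<subseteq> mor L" "finite ?C"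
    using R(1,2) assms(2) by auto
  have "{y \<in> topspace ?Y. \<mu> \<in> replace_prefix L \<alpha> \<beta> y} = ?Z \<inter> (\<Union>c\<in>?C. {y \<in> pathspace L. c \<in> y})"
    using R(3) pathspace_filter topY by auto
  moreover have "openin (pathtop L) (\<Union>c\<in>?C. {y \<in> pathspace L. c \<in> y})"
    using C by (intro openin_Union) (auto intro: openin_pathtop_containing)
  ultimately show "openin ?Y {y \<in> topspace ?Y. \<mu> \<in> replace_prefix L \<alpha> \<beta> y}"
    by (simp add: openin_subtopology_Int2)
  have "{y \<in> topspace ?Y. \<mu> \<notin> replace_prefix L \<alpha> \<beta> y} = ?Z \<inter> (cylinder (mor L) {} ?C \<inter> pathspace L)"
  proof (rule set_eqI)
    fix y
    show "y \<in> {y \<in> topspace ?Y. \<mu> \<notin> replace_prefix L \<alpha> \<beta> y} \<longleftrightarrow>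
        y \<in> ?Z \<inter> (cylinder (mor L) {} ?C \<inter> pathspace L)"
    proof (cases "y \<in> ?Z")
      case True
      then have "y \<subseteq> mor L" "is_filter L y"
        using pathspace_subset pathspace_filter by auto
      then show ?thesis
        using True R(3)[of y] topY unfolding cylinder_def by blast
    qed (use topY in auto)
  qed
  moreover have "openin (pathtop L) (cylinder (mor L) {} ?C \<inter> pathspace L)"
    using openin_pathtop_cylinder C by auto
  ultimately show "openin ?Y {y \<in> topspace ?Y. \<mu> \<notin> replace_prefix L \<alpha> \<beta> y}"
    by (simp add: openin_subtopology_Int2)
qed

lemma gpd_basic_set_eq_source_section_image:
  assumes "\<alpha> \<in> FA L" "\<beta> \<in> mor L" "src L \<alpha> = src L \<beta>"
  shows "gpd_basic_set P L (deg L \<alpha>) (deg L \<beta>) {x \<in> pathspace L. \<alpha> \<in> x} {y \<in> pathspace L. \<beta> \<in> y} =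
    source_section L \<alpha> \<beta> ` {y \<in> pathspace L. \<beta> \<in> y}"
proof (intro equalityI subsetI)
  fix g assume g: "g \<in> gpd_basic_set P L (deg L \<alpha>) (deg L \<beta>) {x \<in> pathspace L. \<alpha> \<in> x} {y \<in> pathspace L. \<beta> \<in> y}"
  obtain x q y where gx: "g = (x, q, y)"
    by (cases g)
  have "(x, q, y) \<in> gpd_basic_set P L (deg L \<alpha>) (deg L \<beta>) {x \<in> pathspace L. \<alpha> \<in> x} {y \<in> pathspace L. \<beta> \<in> y}"
    using g gx by simp
  then obtain \<alpha>' \<beta>' where xy: "x \<in> pathspace L" "y \<in> pathspace L" "\<alpha> \<in> x" "\<beta> \<in> y"
      and w: "gpd_witness L x q y \<alpha>' \<beta>'" "deg L \<alpha>' = deg L \<alpha>" "deg L \<beta>' = deg L \<beta>"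
    unfolding gpd_basic_set_iff by blast
  then have "\<alpha>' = \<alpha>" "\<beta>' = \<beta>"
    using filter_deg_unique pathspace_filter unfolding gpd_witness_def by metis+
  then have "x = replace_prefix L \<alpha> \<beta> y" "q = deg L \<alpha> + - deg L \<beta>"
    using replace_prefix_unique pathspace_filter xy w unfolding gpd_witness_def by blast+
  then show "g \<in> source_section L \<alpha> \<beta> ` {y \<in> pathspace L. \<beta> \<in> y}"
    unfolding source_section_def using gx xy by blast
next
  fix g assume "g \<in> source_section L \<alpha> \<beta> ` {y \<in> pathspace L. \<beta> \<in> y}"
  then obtain y where y: "y \<in> pathspace L" "\<beta> \<in> y" "g = (replace_prefix L \<alpha> \<beta> y, deg L \<alpha> + - deg L \<beta>, y)"
    unfolding source_section_def by blast
  then show "g \<in> gpd_basic_set P L (deg L \<alpha>) (deg L \<beta>) {x \<in> pathspace L. \<alpha> \<in> x} {y \<in> pathspace L. \<beta> \<in> y}"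
    using replace_prefix_witness[OF y(1,2) assms(1,3)] y(1,2) unfolding y(3) gpd_basic_set_iff gpd_witness_def
    by blast
qed

lemma continuous_map_source_section:
  assumes "\<alpha> \<in> FA L" "\<beta> \<in> mor L" "src L \<alpha> = src L \<beta>"
  shows "continuous_map (subtopology (pathtop L) {y \<in> pathspace L. \<beta> \<in> y}) (pathgpd_top P L)
    (source_section L \<alpha> \<beta>)"
proof (rule continuous_map_into_pathgpd)
  let ?Z = "{y \<in> pathspace L. \<beta> \<in> y}"
  let ?\<Phi> = "source_section L \<alpha> \<beta>"
  have \<Phi>: "?\<Phi> y \<in> gpd_basic_set P L (deg L \<alpha>) (deg L \<beta>) {x \<in> pathspace L. \<alpha> \<in> x} ?Z" if "y \<in> ?Z" for y
    using gpd_basic_set_eq_source_section_image[OF assms] that by blast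
  show "?\<Phi> u \<in> pathgpd P L" if "u \<in> topspace (subtopology (pathtop L) ?Z)" for u
  proof -
    have "?\<Phi> u \<in> gpd_basic_set P L (deg L \<alpha>) (deg L \<beta>) {x \<in> pathspace L. \<alpha> \<in> x} ?Z"
      using \<Phi> that by simp
    then show ?thesis
      using gpd_basic_set_subset by blast
  qed
  fix u x q y assume u: "u \<in> topspace (subtopology (pathtop L) ?Z)" and eq: "?\<Phi> u = (x, q, y)"
  show "\<exists>\<alpha>' \<beta>'. gpd_witness L x q y \<alpha>' \<beta>' \<and>
      (\<forall>U V. openin (pathtop L) U \<and> openin (pathtop L) V \<and> ?\<Phi> u \<in> gpd_basic_set P L (deg L \<alpha>') (deg L \<beta>') U V \<longrightarrow>
        (\<exists>N. openin (subtopology (pathtop L) ?Z) N \<and> u \<in> N \<and>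
          ?\<Phi> ` N \<subseteq> gpd_basic_set P L (deg L \<alpha>') (deg L \<beta>') U V))"
  proof (intro exI conjI allI impI)
    have "u \<in> ?Z"
      using u by simp
    then show "gpd_witness L x q y \<alpha> \<beta>"
      using replace_prefix_witness(2)[OF _ _ assms(1,3)] eq unfolding source_section_def by auto
    fix U V assume UV: "openin (pathtop L) U \<and> openin (pathtop L) V \<and>
        ?\<Phi> u \<in> gpd_basic_set P L (deg L \<alpha>) (deg L \<beta>) U V"
    let ?N = "{v \<in> topspace (subtopology (pathtop L) ?Z). replace_prefix L \<alpha> \<beta> v \<in> U} \<inter> (?Z \<inter> V)"
    have "openin (subtopology (pathtop L) ?Z)
        {v \<in> topspace (subtopology (pathtop L) ?Z). replace_prefix L \<alpha> \<beta> v \<in> U}"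
      using continuous_map_replace_prefix[OF assms] UV unfolding continuous_map by blast
    moreover have "openin (subtopology (pathtop L) ?Z) (?Z \<inter> V)"
      using UV by (simp add: openin_subtopology_Int2)
    ultimately show "openin (subtopology (pathtop L) ?Z) ?N"
      by (rule openin_Int)
    show "u \<in> ?N"
      using UV u unfolding gpd_basic_set_iff source_section_def by auto
    show "?\<Phi> ` ?N \<subseteq> gpd_basic_set P L (deg L \<alpha>) (deg L \<beta>) U V"
    proof (rule image_subsetI)
      fix v assume "v \<in> ?N"
      then show "?\<Phi> v \<in> gpd_basic_set P L (deg L \<alpha>) (deg L \<beta>) U V"
        using \<Phi>[of v] unfolding gpd_basic_set_iff source_section_def by auto
    qed
  qed
qed

lemma homeomorphic_map_source_section:
  assumes "\<alpha> \<in> FA L" "\<beta> \<in> mor L" "src L \<alpha> = src L \<beta>" "S \<subseteq> {y \<in> pathspace L. \<beta> \<in> y}"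
  shows "tg_src ` (source_section L \<alpha> \<beta> ` S) = (\<lambda>x. (x, 0, x)) ` S"
    and "homeomorphic_map (subtopology (pathgpd_top P L) (source_section L \<alpha> \<beta> ` S))
      (subtopology (pathgpd_top P L) ((\<lambda>x. (x, 0, x)) ` S)) tg_src"
proof -
  let ?\<Phi> = "source_section L \<alpha> \<beta>"
  show src_eq: "tg_src ` (?\<Phi> ` S) = (\<lambda>x. (x, 0, x)) ` S"
    unfolding image_image source_section_def tg_src_def by simp
  have "homeomorphic_maps (subtopology (pathgpd_top P L) (?\<Phi> ` S))
      (subtopology (pathgpd_top P L) ((\<lambda>x. (x, 0, x)) ` S)) tg_src (?\<Phi> \<circ> fst)"
    unfolding homeomorphic_maps_def
  proof (intro conjI)
    show "continuous_map (subtopology (pathgpd_top P L) (?\<Phi> ` S))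
        (subtopology (pathgpd_top P L) ((\<lambda>x. (x, 0, x)) ` S)) tg_src"
      using continuous_map_from_subtopology[OF continuous_map_gpd_source] src_eq
      unfolding continuous_map_in_subtopology by auto
    have "continuous_map (subtopology (pathgpd_top P L) ((\<lambda>x. (x, 0, x)) ` S))
        (subtopology (pathtop L) {y \<in> pathspace L. \<beta> \<in> y}) fst"
      using continuous_map_from_subtopology[OF continuous_map_gpd_range] assms(4)
      unfolding continuous_map_in_subtopology by auto
    then have "continuous_map (subtopology (pathgpd_top P L) ((\<lambda>x. (x, 0, x)) ` S)) (pathgpd_top P L) (?\<Phi> \<circ> fst)"
      using continuous_map_source_section[OF assms(1-3)] by (rule continuous_map_compose)
    then show "continuous_map (subtopology (pathgpd_top P L) ((\<lambda>x. (x, 0, x)) ` S))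
        (subtopology (pathgpd_top P L) (?\<Phi> ` S)) (?\<Phi> \<circ> fst)"
      unfolding continuous_map_in_subtopology by auto
  qed (auto simp: source_section_def tg_src_def)
  then show "homeomorphic_map (subtopology (pathgpd_top P L) (?\<Phi> ` S))
      (subtopology (pathgpd_top P L) ((\<lambda>x. (x, 0, x)) ` S)) tg_src"
    by (rule homeomorphic_maps_imp_map)
qed

lemma openin_units_containing:
  assumes "\<beta> \<in> mor L"
  shows "openin (subtopology (pathgpd_top P L) ((\<lambda>x. (x, 0, x)) ` D))
    ((\<lambda>x. (x, 0, x)) ` ({y \<in> pathspace L. \<beta> \<in> y} \<inter> D))"
proof -
  let ?Z = "{y \<in> pathspace L. \<beta> \<in> y}"
  have eq: "gpd_basic_set P L (deg L \<beta>) (deg L \<beta>) ?Z ?Z \<inter> (\<lambda>x. (x, 0, x)) ` D = (\<lambda>x. (x, 0, x)) ` (?Z \<inter> D)"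
  proof (intro equalityI subsetI)
    fix g assume g: "g \<in> gpd_basic_set P L (deg L \<beta>) (deg L \<beta>) ?Z ?Z \<inter> (\<lambda>x. (x, 0, x)) ` D"
    then obtain z where "z \<in> D" "g = (z, 0, z)"
      by blast
    moreover from this have "z \<in> ?Z"
      using g unfolding gpd_basic_set_def by blast
    ultimately show "g \<in> (\<lambda>x. (x, 0, x)) ` (?Z \<inter> D)"
      by blast
  next
    fix g :: "'a set \<times> 'q \<times> 'a set" assume "g \<in> (\<lambda>x. (x, 0, x)) ` (?Z \<inter> D)"
    then obtain z where z: "z \<in> ?Z" "z \<in> D" "g = (z, 0, z)"
      by blast
    then have "(z, 0, z) \<in> gpd_basic_set P L (deg L \<beta>) (deg L \<beta>) ?Z ?Z"
      unfolding gpd_basic_set_iff using gpd_witness_refl by blast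
    with z show "g \<in> gpd_basic_set P L (deg L \<beta>) (deg L \<beta>) ?Z ?Z \<inter> (\<lambda>x. (x, 0, x)) ` D"
      by blast
  qed
  have "openin (pathgpd_top P L) (gpd_basic_set P L (deg L \<beta>) (deg L \<beta>) ?Z ?Z)"
    using openin_gpd_basic_set openin_pathtop_containing assms by simp
  then show ?thesis
    unfolding eq[symmetric] by (rule openin_subtopology_Int)
qed

end

section \<open>The boundary-path space\<close>

context P_graph begin

lemma closedin_bdryspace: "closedin (pathtop L) (bdryspace L)"
  unfolding bdryspace_def by simp

lemma bdryspace_invariant:
  assumes g: "(x, q, y) \<in> pathgpd P L" and y: "y \<in> bdryspace L"
  shows "x \<in> bdryspace L"
proof -
  obtain \<alpha> \<beta> where w: "gpd_witness L x q y \<alpha> \<beta>" and \<alpha>: "\<alpha> \<in> FA L" and \<beta>: "\<beta> \<in> FA L"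
    using gpd_witness_FA[OF g] by blast
  have X: "x \<in> pathspace L" "y \<in> pathspace L"
    using g unfolding pathgpd_iff by auto
  then have f: "is_filter L x" "is_filter L y"
    using pathspace_filter by auto
  have mor: "\<alpha> \<in> mor L" "\<beta> \<in> mor L"
    using \<alpha> \<beta> unfolding FA_def by auto
  have src: "src L \<alpha> = src L \<beta>"
    using shift_by_eq_src f w unfolding gpd_witness_def by blast
  have x_eq: "x = replace_prefix L \<alpha> \<beta> y"
    using replace_prefix_unique[OF f(1) w] .
  let ?Z = "{y \<in> pathspace L. \<beta> \<in> y}"
  show ?thesis
    unfolding bdryspace_def in_closure_of
  proof (intro conjI allI impI)
    show "x \<in> topspace (pathtop L)"
      using X by simp
    fix T assume T: "x \<in> T \<and> openin (pathtop L) T"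
    have "openin (subtopology (pathtop L) ?Z) {u \<in> ?Z. replace_prefix L \<alpha> \<beta> u \<in> T}"
      using continuous_map_replace_prefix[OF \<alpha> mor(2) src] T unfolding continuous_map by auto
    then have preimage_open: "openin (pathtop L) {u \<in> ?Z. replace_prefix L \<alpha> \<beta> u \<in> T}"
      using openin_trans_full openin_pathtop_containing[OF mor(2)] by blast
    have "y \<in> {u \<in> ?Z. replace_prefix L \<alpha> \<beta> u \<in> T}"
      using X w T x_eq unfolding gpd_witness_def by auto
    moreover have "\<forall>T. y \<in> T \<and> openin (pathtop L) T \<longrightarrow> (\<exists>u. u \<in> ultrafilters L \<inter> pathspace L \<and> u \<in> T)"
      using y unfolding bdryspace_def in_closure_of by (rule conjunct2)
    ultimately obtain y' where "y' \<in> ultrafilters L \<inter> pathspace L" "y' \<in> {u \<in> ?Z. replace_prefix L \<alpha> \<beta> u \<in> T}"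
      using preimage_open by meson
    then have y': "y' \<in> ultrafilters L" "y' \<in> pathspace L" "\<beta> \<in> y'" "replace_prefix L \<alpha> \<beta> y' \<in> T"
      by simp_all
    then have "src L \<alpha> \<in> shift_by L y' \<beta>"
      using src_mem_shift_by[OF pathspace_filter, of y' \<beta>] src by simp
    then have "replace_prefix L \<alpha> \<beta> y' \<in> ultrafilters L"
      unfolding replace_prefix_def using prepend_ultrafilter[OF shift_by_ultrafilter[OF y'(1,3)] mor(1)] by blast
    moreover have "replace_prefix L \<alpha> \<beta> y' \<in> pathspace L"
      using replace_prefix_witness(1)[OF y'(2,3) \<alpha> src] .
    ultimately show "\<exists>u. u \<in> ultrafilters L \<inter> pathspace L \<and> u \<in> T"
      using y'(4) by blast
  qed
qed

end

section \<open>Reductions to closed invariant sets of units\<close>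

lemma compact_open_base_iff:
  "neighbourhood_base_of (\<lambda>K. compactin X K \<and> openin X K) X \<longleftrightarrow>
    (\<forall>U x. openin X U \<and> x \<in> U \<longrightarrow> (\<exists>K. compactin X K \<and> openin X K \<and> x \<in> K \<and> K \<subseteq> U))"
  by (subst open_neighbourhood_base_of) auto

lemma homeomorphic_map_compact_open_base:
  assumes f: "homeomorphic_map X Y f"
    and X: "neighbourhood_base_of (\<lambda>K. compactin X K \<and> openin X K) X"
  shows "neighbourhood_base_of (\<lambda>K. compactin Y K \<and> openin Y K) Y"
proof -
  obtain g where "homeomorphic_maps X Y f g"
    using f homeomorphic_map_maps by blast
  then have g: "homeomorphic_map Y X g" and fg_id: "\<forall>y\<in>topspace Y. f (g y) = y"
    unfolding homeomorphic_maps_map by auto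
  have "\<exists>K. compactin Y K \<and> openin Y K \<and> y \<in> K \<and> K \<subseteq> U" if U: "openin Y U" "y \<in> U" for U y
  proof -
    have U_sub: "U \<subseteq> topspace Y"
      using U openin_subset by auto
    then have "openin X (g ` U)" "g y \<in> g ` U"
      using homeomorphic_map_openness[OF g] U by auto
    then obtain K where K: "compactin X K" "openin X K" "g y \<in> K" "K \<subseteq> g ` U"
      using X unfolding compact_open_base_iff by blast
    then have K_sub: "K \<subseteq> topspace X"
      using openin_subset by auto
    have "f ` K \<subseteq> U"
    proof
      fix k assume "k \<in> f ` K"
      then obtain u where "u \<in> U" "k = f (g u)"
        using K(4) by blast
      then show "k \<in> U"
        using fg_id U_sub by auto
    qed
    moreover have "y \<in> f ` K"
      using K(3) fg_id U_sub U(2) by (metis image_eqI subsetD)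
    moreover have "compactin Y (f ` K)" "openin Y (f ` K)"
      using homeomorphic_map_compactness[OF f K_sub] homeomorphic_map_openness[OF f K_sub] K(1,2) by simp_all
    ultimately show ?thesis
      by blast
  qed
  then show ?thesis
    unfolding compact_open_base_iff by blast
qed

lemma compact_open_base_closedin_subtopology:
  assumes "closedin X D" "neighbourhood_base_of (\<lambda>K. compactin X K \<and> openin X K) X"
  shows "neighbourhood_base_of (\<lambda>K. compactin (subtopology X D) K \<and> openin (subtopology X D) K)
    (subtopology X D)"
proof -
  have "\<exists>K. compactin (subtopology X D) K \<and> openin (subtopology X D) K \<and> x \<in> K \<and> K \<subseteq> U"
    if U: "openin (subtopology X D) U" "x \<in> U" for U x
  proof -
    obtain W where W: "openin X W" "U = W \<inter> D"
      using U(1) unfolding openin_subtopology by blast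
    moreover have "x \<in> W"
      using U(2) W(2) by blast
    ultimately obtain K where K: "compactin X K" "openin X K" "x \<in> K" "K \<subseteq> W"
      using assms(2) unfolding compact_open_base_iff by meson
    have "compactin X (D \<inter> K)"
      using closed_Int_compactin[OF assms(1) K(1)] .
    then have "compactin (subtopology X D) (K \<inter> D)"
      unfolding compactin_subtopology by (simp add: Int_commute)
    moreover have "openin (subtopology X D) (K \<inter> D)"
      using K(2) by (rule openin_subtopology_Int)
    moreover have "x \<in> K \<inter> D" "K \<inter> D \<subseteq> U"
      using K(3,4) W(2) U(2) by auto
    ultimately show ?thesis
      by blast
  qed
  then show ?thesis
    unfolding compact_open_base_iff by blast
qed

lemma locally_compact_space_open_cover:
  assumes "\<And>x. x \<in> topspace X \<Longrightarrow> \<exists>W. openin X W \<and> x \<in> W \<and> locally_compact_space (subtopology X W)"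
  shows "locally_compact_space X"
  unfolding locally_compact_space_def
proof
  fix x assume "x \<in> topspace X"
  then obtain W where W: "openin X W" "x \<in> W" "locally_compact_space (subtopology X W)"
    using assms by blast
  moreover have "x \<in> topspace (subtopology X W)"
    using W(1,2) openin_subset by auto
  ultimately obtain U K where UK: "openin (subtopology X W) U" "compactin (subtopology X W) K" "x \<in> U" "U \<subseteq> K"
    unfolding locally_compact_space_def by blast
  then have "openin X U" "compactin X K"
    using openin_trans_full[OF UK(1) W(1)] compactin_subtopology by auto
  with UK(3,4) show "\<exists>U K. openin X U \<and> compactin X K \<and> x \<in> U \<and> U \<subseteq> K"
    by blast
qed

definition gpd_reduction :: "'q::group_add set \<Rightarrow> ('a, 'q) pgraph \<Rightarrow> 'a set set \<Rightarrow> ('a set \<times> 'q \<times> 'a set) set" where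
  "gpd_reduction P L D = {(x, q, y) \<in> pathgpd P L. x \<in> D \<and> y \<in> D}"

context P_graph begin

context
  fixes D assumes D_closed: "closedin (pathtop L) D"
    and D_invariant: "\<And>x q y. (x, q, y) \<in> pathgpd P L \<Longrightarrow> y \<in> D \<Longrightarrow> x \<in> D"
begin

lemma D_subset_pathspace: "D \<subseteq> pathspace L"
  using closedin_subset[OF D_closed] by simp

lemma topspace_reduction: "topspace (subtopology (pathgpd_top P L) (gpd_reduction P L D)) = gpd_reduction P L D"
  unfolding gpd_reduction_def by auto

lemma subtopology_reduction:
  "W \<subseteq> gpd_reduction P L D \<Longrightarrow>
    subtopology (subtopology (pathgpd_top P L) (gpd_reduction P L D)) W = subtopology (pathgpd_top P L) W"
  by (simp add: subtopology_subtopology Int_absorb1)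

lemma units_in_reduction: "(\<lambda>x. (x, 0, x)) ` D \<subseteq> gpd_reduction P L D"
  unfolding gpd_reduction_def using pathgpd_unit D_subset_pathspace by auto

lemma tg_units_reduction:
  "tg_units (subtopology (pathgpd_top P L) (gpd_reduction P L D)) = (\<lambda>x. (x, 0, x)) ` D"
proof
  show "tg_units (subtopology (pathgpd_top P L) (gpd_reduction P L D)) \<subseteq> (\<lambda>x. (x, 0, x)) ` D"
    unfolding tg_units_def topspace_reduction gpd_reduction_def by (auto simp: image_iff)
  show "(\<lambda>x. (x, 0, x)) ` D \<subseteq> tg_units (subtopology (pathgpd_top P L) (gpd_reduction P L D))"
    using units_in_reduction unfolding tg_units_def topspace_reduction by auto
qed

lemma homeomorphic_map_units:
  "homeomorphic_map (subtopology (pathtop L) D) (subtopology (pathgpd_top P L) ((\<lambda>x. (x, 0, x)) ` D))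
    (\<lambda>x. (x, 0, x))"
  unfolding homeomorphic_map_maps
proof (intro exI[of _ fst])
  show "homeomorphic_maps (subtopology (pathtop L) D) (subtopology (pathgpd_top P L) ((\<lambda>x. (x, 0, x)) ` D))
      (\<lambda>x. (x, 0, x)) fst"
    unfolding homeomorphic_maps_def
  proof (intro conjI)
    show "continuous_map (subtopology (pathtop L) D) (subtopology (pathgpd_top P L) ((\<lambda>x. (x, 0, x)) ` D))
        (\<lambda>x. (x, 0, x))"
      using continuous_map_from_subtopology[OF continuous_map_gpd_unit]
      unfolding continuous_map_in_subtopology by auto
    show "continuous_map (subtopology (pathgpd_top P L) ((\<lambda>x. (x, 0, x)) ` D)) (subtopology (pathtop L) D) fst"
      using continuous_map_from_subtopology[OF continuous_map_gpd_range]
      unfolding continuous_map_in_subtopology by auto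
  qed auto
qed

lemma topological_groupoid_reduction:
  "topological_groupoid (subtopology (pathgpd_top P L) (gpd_reduction P L D))"
  unfolding topological_groupoid_def
proof
  let ?T = "subtopology (pathgpd_top P L) (gpd_reduction P L D)"
  have "tg_inv g \<in> gpd_reduction P L D" if "g \<in> gpd_reduction P L D" for g
    using that pathgpd_inverse unfolding gpd_reduction_def tg_inv_def by auto
  then show "continuous_map ?T ?T tg_inv"
    using continuous_map_from_subtopology[OF continuous_map_gpd_inverse]
    unfolding continuous_map_in_subtopology topspace_reduction by blast
  have sub: "(gpd_reduction P L D \<times> gpd_reduction P L D) \<inter> tg_composable ?T \<subseteq> tg_composable (pathgpd_top P L)"
    unfolding tg_composable_def topspace_reduction gpd_reduction_def by auto
  have "subtopology (prod_topology ?T ?T) (tg_composable ?T) =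
      subtopology (prod_topology (pathgpd_top P L) (pathgpd_top P L))
        ((gpd_reduction P L D \<times> gpd_reduction P L D) \<inter> tg_composable ?T)"
    unfolding subtopology_Times[symmetric] subtopology_subtopology ..
  then have cont:
      "continuous_map (subtopology (prod_topology ?T ?T) (tg_composable ?T)) (pathgpd_top P L) tg_mult"
    using continuous_map_from_subtopology_mono[OF continuous_map_gpd_mult sub] by simp
  have "tg_mult gh \<in> gpd_reduction P L D"
    if "gh \<in> topspace (subtopology (prod_topology ?T ?T) (tg_composable ?T))" for gh
  proof -
    have "tg_mult gh \<in> pathgpd P L"
      using continuous_map_image_subset_topspace[OF cont] that by auto
    moreover have "fst (tg_mult gh) \<in> D" "snd (snd (tg_mult gh)) \<in> D"
      using that unfolding tg_mult_def tg_composable_def topspace_reduction gpd_reduction_def by auto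
    ultimately show ?thesis
      unfolding gpd_reduction_def by (cases "tg_mult gh") auto
  qed
  then show "continuous_map (subtopology (prod_topology ?T ?T) (tg_composable ?T)) ?T tg_mult"
    using cont unfolding continuous_map_in_subtopology by blast
qed

lemma source_section_image_reduction:
  assumes "\<alpha> \<in> FA L" "\<beta> \<in> mor L" "src L \<alpha> = src L \<beta>"
  shows "source_section L \<alpha> \<beta> ` ({y \<in> pathspace L. \<beta> \<in> y} \<inter> D) =
    gpd_basic_set P L (deg L \<alpha>) (deg L \<beta>) {x \<in> pathspace L. \<alpha> \<in> x} {y \<in> pathspace L. \<beta> \<in> y} \<inter>
      gpd_reduction P L D"
proof -
  have "source_section L \<alpha> \<beta> z \<in> gpd_reduction P L D \<longleftrightarrow> z \<in> D" if "z \<in> pathspace L" "\<beta> \<in> z" for z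
  proof -
    have "source_section L \<alpha> \<beta> z \<in> pathgpd P L"
      using gpd_basic_set_eq_source_section_image[OF assms] gpd_basic_set_subset that by blast
    then show ?thesis
      using D_invariant unfolding gpd_reduction_def source_section_def by auto
  qed
  then show ?thesis
    unfolding gpd_basic_set_eq_source_section_image[OF assms] by blast
qed

lemma reduction_bisection:
  assumes g: "g \<in> gpd_reduction P L D"
  obtains W where "openin (subtopology (pathgpd_top P L) (gpd_reduction P L D)) W" "g \<in> W"
    "W \<subseteq> gpd_reduction P L D" "tg_src ` W \<subseteq> (\<lambda>x. (x, 0, x)) ` D"
    "openin (subtopology (pathgpd_top P L) ((\<lambda>x. (x, 0, x)) ` D)) (tg_src ` W)"
    "homeomorphic_map (subtopology (pathgpd_top P L) W) (subtopology (pathgpd_top P L) (tg_src ` W)) tg_src"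
proof -
  obtain x q y where gx: "g = (x, q, y)" and G: "(x, q, y) \<in> pathgpd P L" and D: "x \<in> D" "y \<in> D"
    using g unfolding gpd_reduction_def by auto
  obtain \<alpha> \<beta> where w: "gpd_witness L x q y \<alpha> \<beta>" and \<alpha>: "\<alpha> \<in> FA L" and \<beta>: "\<beta> \<in> FA L"
    using gpd_witness_FA[OF G] by blast
  have X: "x \<in> pathspace L" "y \<in> pathspace L"
    using G unfolding pathgpd_iff by auto
  have mor: "\<alpha> \<in> mor L" "\<beta> \<in> mor L"
    using \<alpha> \<beta> unfolding FA_def by auto
  have src: "src L \<alpha> = src L \<beta>"
    using shift_by_eq_src pathspace_filter X w unfolding gpd_witness_def by blast
  let ?Za = "{x \<in> pathspace L. \<alpha> \<in> x}" and ?Zb = "{y \<in> pathspace L. \<beta> \<in> y}"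
  define W where "W = source_section L \<alpha> \<beta> ` (?Zb \<inter> D)"
  have W_eq: "W = gpd_basic_set P L (deg L \<alpha>) (deg L \<beta>) ?Za ?Zb \<inter> gpd_reduction P L D"
    unfolding W_def using source_section_image_reduction[OF \<alpha> mor(2) src] .
  have "openin (pathgpd_top P L) (gpd_basic_set P L (deg L \<alpha>) (deg L \<beta>) ?Za ?Zb)"
    using openin_gpd_basic_set openin_pathtop_containing mor by simp
  then have W_open: "openin (subtopology (pathgpd_top P L) (gpd_reduction P L D)) W"
    unfolding W_eq by (rule openin_subtopology_Int)
  have g_mem: "g \<in> W"
  proof -
    have "g = source_section L \<alpha> \<beta> y"
      using replace_prefix_unique[OF pathspace_filter[OF X(1)] w] w
      unfolding gx source_section_def gpd_witness_def by simp
    moreover have "y \<in> ?Zb \<inter> D"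
      using X(2) D(2) w unfolding gpd_witness_def by blast
    ultimately show ?thesis
      unfolding W_def by (rule image_eqI)
  qed
  have W_sub: "W \<subseteq> gpd_reduction P L D"
    unfolding W_eq by (rule Int_lower2)
  have src_W: "tg_src ` W = (\<lambda>x. (x, 0, x)) ` (?Zb \<inter> D)"
    unfolding W_def by (rule homeomorphic_map_source_section(1)[OF \<alpha> mor(2) src]) blast
  then have src_W_sub: "tg_src ` W \<subseteq> (\<lambda>x. (x, 0, x)) ` D"
    by blast
  have src_W_open: "openin (subtopology (pathgpd_top P L) ((\<lambda>x. (x, 0, x)) ` D)) (tg_src ` W)"
    unfolding src_W by (rule openin_units_containing[OF mor(2)])
  have "homeomorphic_map (subtopology (pathgpd_top P L) W) (subtopology (pathgpd_top P L) (tg_src ` W)) tg_src"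
    unfolding src_W unfolding W_def by (rule homeomorphic_map_source_section(2)[OF \<alpha> mor(2) src]) blast
  then show ?thesis
    by (rule that[OF W_open g_mem W_sub src_W_sub src_W_open])
qed

lemma ample_reduction: "ample (subtopology (pathgpd_top P L) (gpd_reduction P L D))"
proof -
  let ?T = "subtopology (pathgpd_top P L) (gpd_reduction P L D)"
  let ?U = "subtopology (pathgpd_top P L) ((\<lambda>x. (x, 0, x)) ` D)"
  have units: "subtopology ?T (tg_units ?T) = ?U"
    unfolding tg_units_reduction using subtopology_reduction[OF units_in_reduction] .
  have base: "neighbourhood_base_of (\<lambda>K. compactin ?U K \<and> openin ?U K) ?U"
    using homeomorphic_map_compact_open_base[OF homeomorphic_map_units
        compact_open_base_closedin_subtopology[OF D_closed pathtop_compact_open_base]] .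
  have Hausdorff_U: "Hausdorff_space ?U"
    using homeomorphic_Hausdorff_space[OF homeomorphic_map_imp_homeomorphic_space[OF homeomorphic_map_units]]
      Hausdorff_space_subtopology[OF Hausdorff_space_pathtop] by simp
  have lc_U: "locally_compact_space ?U"
    by (rule neighbourhood_base_imp_locally_compact_space, rule neighbourhood_base_of_mono[OF base]) simp
  have bisection: "\<exists>W. openin ?T W \<and> g \<in> W \<and> openin ?U (tg_src ` W) \<and>
      homeomorphic_map (subtopology ?T W) (subtopology ?T (tg_src ` W)) tg_src \<and>
      locally_compact_space (subtopology ?T W)" if g: "g \<in> topspace ?T" for g
  proof -
    obtain W where W: "openin ?T W" "g \<in> W" "W \<subseteq> gpd_reduction P L D" "tg_src ` W \<subseteq> (\<lambda>x. (x, 0, x)) ` D"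
        "openin ?U (tg_src ` W)"
        "homeomorphic_map (subtopology (pathgpd_top P L) W) (subtopology (pathgpd_top P L) (tg_src ` W)) tg_src"
      using g[unfolded topspace_reduction] by (rule reduction_bisection)
    have sub: "subtopology ?T W = subtopology (pathgpd_top P L) W"
        "subtopology ?T (tg_src ` W) = subtopology (pathgpd_top P L) (tg_src ` W)"
      using subtopology_reduction[OF W(3)] subtopology_reduction[OF subset_trans[OF W(4) units_in_reduction]]
      by simp_all
    have "subtopology ?U (tg_src ` W) = subtopology (pathgpd_top P L) (tg_src ` W)"
      using W(4) by (simp add: subtopology_subtopology Int_absorb1)
    then have "locally_compact_space (subtopology (pathgpd_top P L) (tg_src ` W))"
      using locally_compact_space_open_subset[OF _ lc_U W(5)] Hausdorff_U by simp
    then have "locally_compact_space (subtopology (pathgpd_top P L) W)"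
      using homeomorphic_locally_compact_space[OF homeomorphic_map_imp_homeomorphic_space[OF W(6)]] by simp
    with W(1,2,5,6) have "openin ?T W \<and> g \<in> W \<and> openin ?U (tg_src ` W) \<and>
        homeomorphic_map (subtopology ?T W) (subtopology ?T (tg_src ` W)) tg_src \<and>
        locally_compact_space (subtopology ?T W)"
      unfolding sub by simp
    then show ?thesis
      by (rule exI[of _ W])
  qed
  show ?thesis
    unfolding ample_def etale_def units compact_open_base_iff[symmetric]
  proof (intro conjI ballI)
    show "topological_groupoid ?T"
      by (rule topological_groupoid_reduction)
    show "locally_compact_space ?T"
      using bisection by (intro locally_compact_space_open_cover) blast
    show "\<exists>W. openin ?T W \<and> g \<in> W \<and> openin ?U (tg_src ` W) \<and>
        homeomorphic_map (subtopology ?T W) (subtopology ?T (tg_src ` W)) tg_src" if "g \<in> topspace ?T" for g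
      using bisection[OF that] by blast
  qed (fact lc_U Hausdorff_U base)+
qed

end

end

theorem theorem5p18:
  fixes P :: "'q::group_add set" and L :: "('a, 'q) pgraph"
  assumes "wqlo P" and "is_Pgraph P L" and "FA L \<noteq> {}"
  shows "ample (pathgpd_top P L) \<and> second_countable (pathgpd_top P L) \<and>
           Hausdorff_space (pathgpd_top P L) \<and>
         ample (bdrygpd_top P L) \<and> second_countable (bdrygpd_top P L) \<and>
           Hausdorff_space (bdrygpd_top P L)"
proof -
  interpret P_graph P L
    using assms(2) by unfold_locales
  have "gpd_reduction P L (pathspace L) = topspace (pathgpd_top P L)"
    unfolding gpd_reduction_def topspace_pathgpd_top by (auto simp: pathgpd_iff) blast
  moreover have "closedin (pathtop L) (pathspace L)"
    using closedin_topspace[of "pathtop L"] by simp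
  ultimately have "ample (pathgpd_top P L)"
    using ample_reduction[of "pathspace L"] subtopology_topspace[of "pathgpd_top P L"]
    by (simp add: pathgpd_iff)
  moreover have "ample (bdrygpd_top P L)"
    unfolding bdrygpd_top_def gpd_reduction_def[symmetric]
    by (rule ample_reduction[OF closedin_bdryspace]) (rule bdryspace_invariant)
  ultimately show ?thesis
    using second_countable_pathgpd_top Hausdorff_space_pathgpd_top
    unfolding bdrygpd_top_def by (simp add: second_countable_subtopology Hausdorff_space_subtopology)
qed

end
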